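(* Let $G_1,\dots,G_m$ be finite simple connected graphs, each with at least two vertices, let $n_i=|V(G_i)|$ and $\Delta_i$ the maximum degree of $G_i$, let $G$ be the Cartesian product of $G_1,\dots,G_m$, and $n=|V(G)|=n_1n_2\cdots n_m$. (a) $$\frac{\min\{\iota_e(G_i):1\le i\le m\}\,n}{4(\Delta_1+\dots+\Delta_m)^2}\le c_{\infty}(G)\le \frac{n\,c_{\infty}(G_j)}{n_j}\quad\text{for every }1\le j\le m.$$ (b) If every $G_i$ is a path and $n_1=\max\{n_i:1\le i\le m\}$, then $\frac{n}{4n_1m^2}\le c_{\infty}(G)\le \frac{n}{n_1}$. (c) If every $G_i$ is a cycle, $n_1=\max\{n_i:1\le i\le m\}$, and $n_1$ is even, then $\frac{n}{2n_1m^2}\le c_{\infty}(G)\le\frac{2n}{n_1}$.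
   Context: The Cartesian product of $G_1,\dots,G_m$ has vertex set $V(G_1)\times\dots\times V(G_m)$, with $(u_1,\dots,u_m)$ adjacent to $(v_1,\dots,v_m)$ iff there is an index $j$ with $u_i=v_i$ for all $i\ne j$ and $u_jv_j\in E(G_j)$. For a graph $H$ on $N$ vertices, $\partial S$ is the set of edges with exactly one endpoint in $S$ and $\iota_e(H)=\min_{0<|S|\le N/2}|\partial S|/|S|$. Cops and Robber with an infinitely fast robber: the game is played on a graph $G$. A set of cops first choose initial vertices (several cops may share a vertex); then the robber, knowing their positions, chooses a vertex. Then the players move in alternating rounds, cops first. In the cops' turn each cop either stays or moves to an adjacent vertex; in the robber's turn she either stays or moves along any path of $G$ starting at her current vertex that contains no vertex currently occupied by a cop. The cops win if at some point a cop moves to the vertex occupied by the robber. $c_{\infty}(G)$ is the minimum number of cops for which the cops have a strategy that guarantees a win. *)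

theory Defs
  imports Complex_Main
begin

definition simple_graph :: "'v set \<Rightarrow> ('v \<Rightarrow> 'v \<Rightarrow> bool) \<Rightarrow> bool" where
  "simple_graph V E \<longleftrightarrow> finite V \<and> (\<forall>x y. E x y \<longrightarrow> x \<in> V \<and> y \<in> V)
     \<and> (\<forall>x y. E x y \<longrightarrow> E y x) \<and> (\<forall>x. \<not> E x x)"

definition connected_graph :: "'v set \<Rightarrow> ('v \<Rightarrow> 'v \<Rightarrow> bool) \<Rightarrow> bool" where
  "connected_graph V E \<longleftrightarrow> (\<forall>x\<in>V. \<forall>y\<in>V. E\<^sup>*\<^sup>* x y)"

definition degree :: "'v set \<Rightarrow> ('v \<Rightarrow> 'v \<Rightarrow> bool) \<Rightarrow> 'v \<Rightarrow> nat" where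
  "degree V E x = card {y\<in>V. E x y}"

definition max_degree :: "'v set \<Rightarrow> ('v \<Rightarrow> 'v \<Rightarrow> bool) \<Rightarrow> nat" where
  "max_degree V E = Max (degree V E ` V)"

definition edge_boundary :: "'v set \<Rightarrow> ('v \<Rightarrow> 'v \<Rightarrow> bool) \<Rightarrow> 'v set \<Rightarrow> ('v \<times> 'v) set" where
  "edge_boundary V E S = {(x, y). x \<in> S \<and> y \<in> V - S \<and> E x y}"

definition edge_iso :: "'v set \<Rightarrow> ('v \<Rightarrow> 'v \<Rightarrow> bool) \<Rightarrow> real" where
  "edge_iso V E = Min ((\<lambda>S. real (card (edge_boundary V E S)) / real (card S))
       ` {S. S \<subseteq> V \<and> 0 < card S \<and> 2 * card S \<le> card V})"

definition prod_V :: "nat \<Rightarrow> (nat \<Rightarrow> 'a set) \<Rightarrow> 'a list set" where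
  "prod_V m V = {xs. length xs = m \<and> (\<forall>i<m. xs ! i \<in> V i)}"

definition prod_E :: "nat \<Rightarrow> (nat \<Rightarrow> 'a set) \<Rightarrow> (nat \<Rightarrow> 'a \<Rightarrow> 'a \<Rightarrow> bool)
     \<Rightarrow> 'a list \<Rightarrow> 'a list \<Rightarrow> bool" where
  "prod_E m V E xs ys \<longleftrightarrow> xs \<in> prod_V m V \<and> ys \<in> prod_V m V \<and>
     (\<exists>j<m. E j (xs ! j) (ys ! j) \<and> (\<forall>i<m. i \<noteq> j \<longrightarrow> xs ! i = ys ! i))"

definition is_path_graph :: "'v set \<Rightarrow> ('v \<Rightarrow> 'v \<Rightarrow> bool) \<Rightarrow> bool" where
  "is_path_graph V E \<longleftrightarrow> (\<exists>f. bij_betw f {0..<card V} V \<and>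
     (\<forall>x y. E x y \<longleftrightarrow> (\<exists>i<card V. \<exists>j<card V. x = f i \<and> y = f j \<and> (i + 1 = j \<or> j + 1 = i))))"

definition is_cycle_graph :: "'v set \<Rightarrow> ('v \<Rightarrow> 'v \<Rightarrow> bool) \<Rightarrow> bool" where
  "is_cycle_graph V E \<longleftrightarrow> 3 \<le> card V \<and> (\<exists>f. bij_betw f {0..<card V} V \<and>
     (\<forall>x y. E x y \<longleftrightarrow> (\<exists>i<card V. \<exists>j<card V. x = f i \<and> y = f j \<and>
        (j = (i + 1) mod card V \<or> i = (j + 1) mod card V))))"

text \<open>Cops and robber with an infinitely fast robber.\<close>

definition cop_step :: "('v \<Rightarrow> 'v \<Rightarrow> bool) \<Rightarrow> 'v list \<Rightarrow> 'v list \<Rightarrow> bool" where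
  "cop_step E cs cs' \<longleftrightarrow> length cs' = length cs \<and>
     (\<forall>i<length cs. cs' ! i = cs ! i \<or> E (cs ! i) (cs' ! i))"

definition robber_reach :: "('v \<Rightarrow> 'v \<Rightarrow> bool) \<Rightarrow> 'v set \<Rightarrow> 'v \<Rightarrow> 'v \<Rightarrow> bool" where
  "robber_reach E C r r' \<longleftrightarrow> (\<lambda>x y. E x y \<and> x \<notin> C \<and> y \<notin> C)\<^sup>*\<^sup>* r r'"

text \<open>cops_force E cs r: it is the cops' turn, cops at cs, robber at r; the cops can force
  a capture in finitely many rounds (the winning region of this reachability game).\<close>

inductive cops_force :: "('v \<Rightarrow> 'v \<Rightarrow> bool) \<Rightarrow> 'v list \<Rightarrow> 'v \<Rightarrow> bool" for E where
  "cop_step E cs cs' \<Longrightarrow>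
   (r \<in> set cs' \<or> (\<forall>r'. robber_reach E (set cs') r r' \<longrightarrow> cops_force E cs' r'))
   \<Longrightarrow> cops_force E cs r"

definition cops_win :: "'v set \<Rightarrow> ('v \<Rightarrow> 'v \<Rightarrow> bool) \<Rightarrow> nat \<Rightarrow> bool" where
  "cops_win V E k \<longleftrightarrow> (\<exists>cs. length cs = k \<and> set cs \<subseteq> V \<and> (\<forall>r\<in>V. cops_force E cs r))"

definition c_inf :: "'v set \<Rightarrow> ('v \<Rightarrow> 'v \<Rightarrow> bool) \<Rightarrow> nat" where
  "c_inf V E = (LEAST k. cops_win V E k)"

end

theory Submission
  imports Defs
begin

text \<open>
  Upper bound: a winning team of G_j is placed in every fibre of the j-th coordinate (a copy of
  G_j); the j-th coordinate of the robber then moves like a robber in G_j, so each team catches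
  her in its own fibre, and n / n_j teams are used.

  Lower bound: the symmetric isoperimetric inequality \<gamma> |A| |V - A| / |V| \<le> |\<partial>A| passes from
  the factors to the product with the same \<gamma> (a pair separated by A is joined by changing one
  coordinate at a time), and \<iota>_e(G_i) provides it for G_i with \<gamma> = \<iota>_e(G_i). In a graph of
  maximum degree \<Delta> satisfying it, 4 k \<Delta>^2 < \<gamma> n forces, for every set C of k cops, a
  component of G minus the closed neighbourhood of C with more than half of the vertices. A robber
  who always stays in this giant component is never caught: after the cops move, the old giant
  component lies in one component of G minus the new cop positions, and it meets the new giant
  component. For paths and cycles one resp. two cops win on a factor, \<Delta> \<le> 2m, and every
  nonempty proper vertex set has at least one resp. two boundary edges, so \<gamma> = 4/n_1 resp. 8/n_1.
\<close>

section \<open>Graphs and the game\<close>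

lemma simple_graphD:
  assumes "simple_graph V E" "E x y"
  shows "x \<in> V" "y \<in> V" "E y x" "x \<noteq> y"
  using assms unfolding simple_graph_def by metis+

lemma simple_graph_finite: "simple_graph V E \<Longrightarrow> finite V"
  by (simp add: simple_graph_def)

lemma degree_le_max_degree: "finite V \<Longrightarrow> x \<in> V \<Longrightarrow> degree V E x \<le> max_degree V E"
  unfolding max_degree_def by (intro Max_ge) auto

lemma max_degree_le:
  assumes "finite V" "V \<noteq> {}" "\<forall>x\<in>V. degree V E x \<le> d"
  shows "max_degree V E \<le> d"
  unfolding max_degree_def using assms by simp

lemma card_edge_boundary_eq_sum:
  assumes "finite V" "finite A"
  shows "card (edge_boundary V E A) = (\<Sum>x\<in>A. card {y \<in> V - A. E x y})"
proof -
  have "edge_boundary V E A = Sigma A (\<lambda>x. {y \<in> V - A. E x y})"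
    unfolding edge_boundary_def by auto
  then show ?thesis using assms by (simp add: card_SigmaI)
qed

lemma finite_edge_boundary: "finite V \<Longrightarrow> A \<subseteq> V \<Longrightarrow> finite (edge_boundary V E A)"
  by (rule finite_subset[of _ "V \<times> V"]) (auto simp: edge_boundary_def)

lemma card_edge_boundary_compl:
  assumes "simple_graph V E" "A \<subseteq> V"
  shows "card (edge_boundary V E (V - A)) = card (edge_boundary V E A)"
proof -
  have "edge_boundary V E (V - A) = prod.swap ` edge_boundary V E A"
    using assms simple_graphD(3)[OF assms(1)] unfolding edge_boundary_def by auto
  then show ?thesis by (simp add: card_image)
qed

lemma card_edge_boundary_singleton:
  assumes "simple_graph V E" "v \<in> V"
  shows "card (edge_boundary V E {v}) = degree V E v"
proof -
  have "{y \<in> V - {v}. E v y} = {y \<in> V. E v y}"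
    using simple_graphD(4)[OF assms(1)] by blast
  then show ?thesis
    using card_edge_boundary_eq_sum[OF simple_graph_finite[OF assms(1)], of "{v}" E]
    by (simp add: degree_def)
qed

lemma cop_step_iff_list_all2:
  "cop_step E cs cs' \<longleftrightarrow> list_all2 (\<lambda>c c'. c' = c \<or> E c c') cs cs'"
  unfolding cop_step_def list_all2_conv_all_nth by auto

lemma cops_win_card:
  assumes "finite V"
  shows "cops_win V E (card V)"
proof -
  obtain cs where cs: "set cs = V" "distinct cs" using finite_distinct_list[OF assms] by blast
  have "cops_force E cs r" if "r \<in> V" for r
    by (rule cops_force.intros[of E cs cs]) (auto simp: cop_step_def cs that)
  then show ?thesis unfolding cops_win_def using cs distinct_card[of cs] by auto
qed

lemma c_inf_le: "cops_win V E k \<Longrightarrow> c_inf V E \<le> k"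
  unfolding c_inf_def by (rule Least_le)

lemma cops_win_c_inf: "finite V \<Longrightarrow> cops_win V E (c_inf V E)"
  unfolding c_inf_def using cops_win_card by (metis LeastI)

lemma le_c_inf:
  assumes "finite V" "\<And>k. real k < x \<Longrightarrow> \<not> cops_win V E k"
  shows "x \<le> real (c_inf V E)"
  using cops_win_c_inf[OF assms(1), of E] assms(2) by force

section \<open>Cartesian products\<close>

lemma prod_V_length: "xs \<in> prod_V m V \<Longrightarrow> length xs = m"
  unfolding prod_V_def by auto

lemma prod_V_nth: "xs \<in> prod_V m V \<Longrightarrow> i < m \<Longrightarrow> xs ! i \<in> V i"
  unfolding prod_V_def by auto

lemma prod_V_update: "xs \<in> prod_V m V \<Longrightarrow> i < m \<Longrightarrow> c \<in> V i \<Longrightarrow> xs[i := c] \<in> prod_V m V"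
  unfolding prod_V_def by (auto simp: nth_list_update)

lemma prod_E_update:
  assumes "w \<in> prod_V m V" "j < m" "simple_graph (V j) (E j)" "E j c c'"
  shows "prod_E m V E (w[j := c]) (w[j := c'])"
proof -
  have "c \<in> V j" "c' \<in> V j" using simple_graphD[OF assms(3,4)] by auto
  then show ?thesis
    unfolding prod_E_def using assms prod_V_length[OF assms(1)]
    by (auto intro!: prod_V_update exI[of _ j] simp: nth_list_update)
qed

lemma finite_prod_V:
  assumes "\<forall>i<m. finite (V i)"
  shows "finite (prod_V m V)"
proof (rule finite_subset)
  show "prod_V m V \<subseteq> {xs. set xs \<subseteq> (\<Union>i<m. V i) \<and> length xs = m}"
    unfolding prod_V_def by (fastforce simp: in_set_conv_nth)
  show "finite {xs. set xs \<subseteq> (\<Union>i<m. V i) \<and> length xs = m}"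
    by (rule finite_lists_length_eq) (use assms in auto)
qed

lemma simple_graph_prod:
  assumes "\<forall>i<m. simple_graph (V i) (E i)"
  shows "simple_graph (prod_V m V) (prod_E m V E)"
proof -
  have "finite (prod_V m V)"
    using assms simple_graph_finite by (blast intro: finite_prod_V)
  moreover have "prod_E m V E y x" if xy: "prod_E m V E x y" for x y
  proof -
    obtain j where j: "j < m" "E j (x ! j) (y ! j)" "\<forall>i<m. i \<noteq> j \<longrightarrow> x ! i = y ! i"
      using xy unfolding prod_E_def by blast
    have "E j (y ! j) (x ! j)" using simple_graphD(3)[of "V j" "E j"] assms j(1,2) by blast
    then show ?thesis using xy j unfolding prod_E_def by auto
  qed
  moreover have "\<not> prod_E m V E x x" for x
  proof
    assume "prod_E m V E x x"
    then obtain j where "j < m" "E j (x ! j) (x ! j)" unfolding prod_E_def by blast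
    then show False using simple_graphD(4)[of "V j" "E j"] assms by blast
  qed
  ultimately show ?thesis unfolding simple_graph_def by (auto simp: prod_E_def)
qed

lemma degree_prod_le:
  assumes "\<forall>i<m. simple_graph (V i) (E i)" "x \<in> prod_V m V"
  shows "degree (prod_V m V) (prod_E m V E) x \<le> (\<Sum>i<m. max_degree (V i) (E i))"
proof -
  have fin: "\<forall>i<m. finite (V i)" using assms(1) simple_graph_finite by blast
  have "{y \<in> prod_V m V. prod_E m V E x y} \<subseteq> (\<Union>i<m. (\<lambda>c. x[i := c]) ` {c \<in> V i. E i (x ! i) c})"
  proof clarify
    fix y assume "y \<in> prod_V m V" "prod_E m V E x y"
    then obtain j where j: "j < m" "E j (x ! j) (y ! j)" "\<forall>i<m. i \<noteq> j \<longrightarrow> x ! i = y ! i"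
      unfolding prod_E_def by blast
    have "y = x[j := y ! j]"
      using j(1,3) prod_V_length[OF assms(2)] prod_V_length[OF \<open>y \<in> prod_V m V\<close>]
      by (intro nth_equalityI) (auto simp: nth_list_update)
    moreover have "y ! j \<in> V j" using simple_graphD(2)[of "V j" "E j"] assms(1) j by blast
    ultimately show "y \<in> (\<Union>i<m. (\<lambda>c. x[i := c]) ` {c \<in> V i. E i (x ! i) c})" using j by blast
  qed
  then have "degree (prod_V m V) (prod_E m V E) x \<le> card (\<Union>i<m. (\<lambda>c. x[i := c]) ` {c \<in> V i. E i (x ! i) c})"
    unfolding degree_def using fin by (intro card_mono) auto
  also have "\<dots> \<le> (\<Sum>i<m. card ((\<lambda>c. x[i := c]) ` {c \<in> V i. E i (x ! i) c}))"
    by (rule card_UN_le) simp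
  also have "\<dots> \<le> (\<Sum>i<m. card {c \<in> V i. E i (x ! i) c})"
    by (intro sum_mono card_image_le) (use fin in simp)
  also have "\<dots> \<le> (\<Sum>i<m. max_degree (V i) (E i))"
    using fin prod_V_nth[OF assms(2)]
    by (intro sum_mono) (simp add: degree_le_max_degree[unfolded degree_def])
  finally show ?thesis .
qed

lemma bij_betw_prod_V_snoc:
  "bij_betw (\<lambda>(w, c). w @ [c]) (prod_V m V \<times> V m) (prod_V (Suc m) V)"
proof (rule bij_betw_byWitness[where f' = "\<lambda>x. (butlast x, last x)"])
  show "\<forall>x\<in>prod_V m V \<times> V m. (\<lambda>x. (butlast x, last x)) ((\<lambda>(w, c). w @ [c]) x) = x"
    by auto
  show "\<forall>x\<in>prod_V (Suc m) V. (\<lambda>(w, c). w @ [c]) (butlast x, last x) = x"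
    by (auto simp: prod_V_def) (metis append_butlast_last_id list.size(3) nat.distinct(1))
  show "(\<lambda>(w, c). w @ [c]) ` (prod_V m V \<times> V m) \<subseteq> prod_V (Suc m) V"
    by (auto simp: prod_V_def nth_append less_Suc_eq)
  show "(\<lambda>x. (butlast x, last x)) ` prod_V (Suc m) V \<subseteq> prod_V m V \<times> V m"
    by (auto simp: prod_V_def nth_butlast)
      (metis Zero_not_Suc diff_Suc_1 last_conv_nth lessI list.size(3))
qed

lemma sum_prod_V_Suc: "(\<Sum>x\<in>prod_V (Suc m) V. F x) = (\<Sum>w\<in>prod_V m V. \<Sum>c\<in>V m. F (w @ [c]))"
  using sum.reindex_bij_betw[OF bij_betw_prod_V_snoc[of m V], of F]
  by (simp add: sum.cartesian_product split_def)

lemma card_prod_V_Suc: "card (prod_V (Suc m) V) = card (prod_V m V) * card (V m)"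
  using bij_betw_same_card[OF bij_betw_prod_V_snoc[of m V]] by (simp add: card_cartesian_product)

lemma card_prod_V: "card (prod_V m V) = (\<Prod>i<m. card (V i))"
proof (induction m)
  case 0
  have "prod_V 0 V = {[]}" unfolding prod_V_def by auto
  then show ?case by simp
next
  case (Suc m)
  then show ?case by (simp add: card_prod_V_Suc)
qed

lemma card_prod_V_ge_2:
  assumes "1 \<le> m" "\<forall>i<m. 2 \<le> card (V i)"
  shows "2 \<le> card (prod_V m V)"
proof -
  have "(2::nat) \<le> 2 ^ m" using assms(1) by (simp add: self_le_power)
  also have "\<dots> = (\<Prod>i<m. 2)" by simp
  also have "\<dots> \<le> (\<Prod>i<m. card (V i))" using assms(2) by (intro prod_mono) auto
  finally show ?thesis by (simp add: card_prod_V)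
qed

text \<open>The slice through d in direction j meets every j-fibre {w[j := c] | c \<in> V j} exactly once.\<close>

definition prod_slice :: "nat \<Rightarrow> (nat \<Rightarrow> 'a set) \<Rightarrow> nat \<Rightarrow> 'a \<Rightarrow> 'a list set" where
  "prod_slice m V j d = {u \<in> prod_V m V. u ! j = d}"

lemma update_mem_prod_slice:
  "u \<in> prod_V m V \<Longrightarrow> j < m \<Longrightarrow> d \<in> V j \<Longrightarrow> u[j := d] \<in> prod_slice m V j d"
  unfolding prod_slice_def by (simp add: prod_V_update prod_V_length)

lemma bij_betw_prod_slice:
  assumes "j < m" "d \<in> V j"
  shows "bij_betw (\<lambda>(w, c). w[j := c]) (prod_slice m V j d \<times> V j) (prod_V m V)"
proof (rule bij_betw_byWitness[where f' = "\<lambda>u. (u[j := d], u ! j)"])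
  show "\<forall>x\<in>prod_slice m V j d \<times> V j. (\<lambda>u. (u[j := d], u ! j)) ((\<lambda>(w, c). w[j := c]) x) = x"
    using assms by (auto simp: prod_slice_def prod_V_length)
  show "\<forall>u\<in>prod_V m V. (\<lambda>(w, c). w[j := c]) (u[j := d], u ! j) = u"
    by simp
  show "(\<lambda>(w, c). w[j := c]) ` (prod_slice m V j d \<times> V j) \<subseteq> prod_V m V"
    using assms by (auto simp: prod_slice_def prod_V_update)
  show "(\<lambda>u. (u[j := d], u ! j)) ` prod_V m V \<subseteq> prod_slice m V j d \<times> V j"
    using assms by (auto simp: update_mem_prod_slice prod_V_nth)
qed

lemma card_prod_V_slice:
  assumes "j < m" "d \<in> V j"
  shows "card (prod_V m V) = card (prod_slice m V j d) * card (V j)"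
  using bij_betw_same_card[OF bij_betw_prod_slice[of j m d V, OF assms]] by (simp add: card_cartesian_product)

lemma sum_prod_V_slice:
  assumes "j < m" "d \<in> V j"
  shows "(\<Sum>u\<in>prod_V m V. F u) = (\<Sum>w\<in>prod_slice m V j d. \<Sum>c\<in>V j. F (w[j := c]))"
  using sum.reindex_bij_betw[OF bij_betw_prod_slice[of j m d V, OF assms], of F]
  by (simp add: sum.cartesian_product split_def)

section \<open>The upper bound: one team of cops per fibre\<close>

definition fibre_cops :: "'a list list \<Rightarrow> nat \<Rightarrow> 'a list \<Rightarrow> 'a list list" where
  "fibre_cops ws j cs = concat (map (\<lambda>w. map (\<lambda>c. w[j := c]) cs) ws)"

lemma set_fibre_cops: "set (fibre_cops ws j cs) = {w[j := c] | w c. w \<in> set ws \<and> c \<in> set cs}"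
  unfolding fibre_cops_def by auto

lemma length_fibre_cops: "length (fibre_cops ws j cs) = length ws * length cs"
  unfolding fibre_cops_def by (induction ws) auto

lemma cop_step_fibre_cops:
  assumes "cop_step (E j) cs cs'" "set ws \<subseteq> prod_V m V" "j < m" "simple_graph (V j) (E j)"
  shows "cop_step (prod_E m V E) (fibre_cops ws j cs) (fibre_cops ws j cs')"
proof -
  have "list_all2 (\<lambda>c c'. w[j := c'] = w[j := c] \<or> prod_E m V E (w[j := c]) (w[j := c'])) cs cs'"
    if "w \<in> set ws" for w
    using assms(1) unfolding cop_step_iff_list_all2
    by (rule list_all2_mono) (use prod_E_update[of w m V j E] assms that in auto)
  then have "list_all2 (list_all2 (\<lambda>c c'. c' = c \<or> prod_E m V E c c'))
      (map (\<lambda>w. map (\<lambda>c. w[j := c]) cs) ws) (map (\<lambda>w. map (\<lambda>c. w[j := c]) cs') ws)"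
    by (auto simp: list_all2_map1 list_all2_map2 intro!: list.rel_refl_strong)
  then show ?thesis
    unfolding cop_step_iff_list_all2 fibre_cops_def by (rule concat_transfer[THEN rel_funD])
qed

lemma robber_reach_fibre_cops_nth:
  assumes "robber_reach (prod_E m V E) (set (fibre_cops ws j cs)) u u'" "u \<in> prod_V m V"
    and "j < m" "set ws = prod_slice m V j d" "d \<in> V j"
  shows "u' \<in> prod_V m V \<and> robber_reach (E j) (set cs) (u ! j) (u' ! j)"
  using assms(1) unfolding robber_reach_def
proof (induction rule: rtranclp_induct)
  case base
  then show ?case using assms(2) by auto
next
  case (step a b)
  have uncovered: "z ! j \<notin> set cs" if "z \<in> prod_V m V" "z \<notin> set (fibre_cops ws j cs)" for z
    using that update_mem_prod_slice[OF that(1) assms(3,5)] assms(4)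
    by (auto simp: set_fibre_cops)
  from step.hyps(2) have ab: "prod_E m V E a b" "a \<notin> set (fibre_cops ws j cs)"
    "b \<notin> set (fibre_cops ws j cs)" by auto
  then have "a \<in> prod_V m V" "b \<in> prod_V m V" unfolding prod_E_def by auto
  obtain i where i: "i < m" "E i (a ! i) (b ! i)" "\<forall>l<m. l \<noteq> i \<longrightarrow> a ! l = b ! l"
    using ab(1) unfolding prod_E_def by auto
  show ?case
  proof (cases "i = j")
    case True
    then have "(\<lambda>x y. E j x y \<and> x \<notin> set cs \<and> y \<notin> set cs) (a ! j) (b ! j)"
      using i uncovered \<open>a \<in> prod_V m V\<close> \<open>b \<in> prod_V m V\<close> ab by auto
    then show ?thesis using step.IH \<open>b \<in> prod_V m V\<close> by (auto intro: rtranclp.rtrancl_into_rtrancl)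
  next
    case False
    then show ?thesis using i assms(3) step.IH \<open>b \<in> prod_V m V\<close> by simp
  qed
qed

lemma cops_force_fibre_cops:
  assumes "cops_force (E j) cs x" "u \<in> prod_V m V" "u ! j = x"
    and "simple_graph (V j) (E j)" "j < m" "set ws = prod_slice m V j d" "d \<in> V j"
  shows "cops_force (prod_E m V E) (fibre_cops ws j cs) u"
  using assms(1-3)
proof (induction arbitrary: u rule: cops_force.induct)
  case (1 cs cs' r)
  have step: "cop_step (prod_E m V E) (fibre_cops ws j cs) (fibre_cops ws j cs')"
    using cop_step_fibre_cops[of E j cs cs' ws m V, OF 1(1)] assms(4-6) by (auto simp: prod_slice_def)
  have "u \<in> set (fibre_cops ws j cs') \<or> (\<forall>u'. robber_reach (prod_E m V E)
      (set (fibre_cops ws j cs')) u u' \<longrightarrow> cops_force (prod_E m V E) (fibre_cops ws j cs') u')"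
  proof (cases "r \<in> set cs'")
    case True
    then have "u \<in> set (fibre_cops ws j cs')"
      using update_mem_prod_slice[OF 1(3) assms(5,7)] 1(4) assms(6)
      by (auto simp: set_fibre_cops) (metis list_update_id list_update_overwrite)
    then show ?thesis ..
  next
    case False
    then show ?thesis
      using 1(2) 1(4) robber_reach_fibre_cops_nth[OF _ 1(3) assms(5-7)] by blast
  qed
  then show ?case by (rule cops_force.intros[OF step])
qed

lemma c_inf_prod_le:
  assumes "\<forall>i<m. finite (V i)" "simple_graph (V j) (E j)" "j < m" "V j \<noteq> {}"
  shows "real (c_inf (prod_V m V) (prod_E m V E))
     \<le> real (card (prod_V m V)) * real (c_inf (V j) (E j)) / real (card (V j))"
proof -
  obtain d where d: "d \<in> V j" using assms(4) by blast
  have "finite (prod_slice m V j d)"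
    using finite_prod_V[OF assms(1)] by (simp add: prod_slice_def)
  then obtain ws where ws: "set ws = prod_slice m V j d" "distinct ws"
    using finite_distinct_list by blast
  have fin: "finite (V j)" using assms(1,3) by simp
  obtain cs where cs: "length cs = c_inf (V j) (E j)" "set cs \<subseteq> V j" "\<forall>r\<in>V j. cops_force (E j) cs r"
    using cops_win_c_inf[OF fin, of "E j"] unfolding cops_win_def by blast
  have "cops_win (prod_V m V) (prod_E m V E) (card (prod_slice m V j d) * c_inf (V j) (E j))"
    unfolding cops_win_def
  proof (intro exI conjI)
    show "length (fibre_cops ws j cs) = card (prod_slice m V j d) * c_inf (V j) (E j)"
      using cs(1) ws distinct_card[of ws] by (simp add: length_fibre_cops)
    show "set (fibre_cops ws j cs) \<subseteq> prod_V m V"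
      using ws(1) cs(2) assms(3) by (auto simp: set_fibre_cops prod_slice_def prod_V_update)
    show "\<forall>u\<in>prod_V m V. cops_force (prod_E m V E) (fibre_cops ws j cs) u"
      using cops_force_fibre_cops[of E j cs _ _ m V, OF _ _ refl assms(2,3) ws(1) d] cs(3) prod_V_nth assms(3) by blast
  qed
  then have "c_inf (prod_V m V) (prod_E m V E) \<le> card (prod_slice m V j d) * c_inf (V j) (E j)"
    by (rule c_inf_le)
  moreover have "card (prod_V m V) = card (prod_slice m V j d) * card (V j)"
    using card_prod_V_slice[of j m d V, OF assms(3) d] .
  moreover have "card (V j) > 0" using fin assms(4) by (simp add: card_gt_0_iff)
  ultimately show ?thesis by (simp add: field_simps) (metis of_nat_le_iff of_nat_mult)
qed

lemma c_inf_prod_le_factor_bound: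
  assumes "\<forall>i<m. simple_graph (V i) (E i)" "j < m" "V j \<noteq> {}" "c_inf (V j) (E j) \<le> k"
  shows "real (c_inf (prod_V m V) (prod_E m V E)) \<le> real k * real (card (prod_V m V)) / real (card (V j))"
proof -
  have "real (c_inf (prod_V m V) (prod_E m V E))
      \<le> real (card (prod_V m V)) * real (c_inf (V j) (E j)) / real (card (V j))"
    using assms(1-3) simple_graph_finite by (intro c_inf_prod_le) auto
  also have "\<dots> \<le> real (card (prod_V m V)) * real k / real (card (V j))"
    using assms(4) by (intro divide_right_mono mult_left_mono) auto
  finally show ?thesis by (simp add: mult.commute)
qed

section \<open>Edge-isoperimetry of products\<close>

text \<open>A symmetric edge-isoperimetric inequality. Unlike the ratio defining edge_iso, it holds
  for a Cartesian product with the same constant as for the factors.\<close>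

definition isoperimetric :: "'v set \<Rightarrow> ('v \<Rightarrow> 'v \<Rightarrow> bool) \<Rightarrow> real \<Rightarrow> bool" where
  "isoperimetric V E \<gamma> \<longleftrightarrow> (\<forall>A\<subseteq>V.
     \<gamma> * real (card A) * real (card (V - A)) / real (card V) \<le> real (card (edge_boundary V E A)))"

lemma isoperimetricD:
  "isoperimetric V E \<gamma> \<Longrightarrow> A \<subseteq> V
   \<Longrightarrow> \<gamma> * real (card A) * real (card (V - A)) / real (card V) \<le> real (card (edge_boundary V E A))"
  unfolding isoperimetric_def by blast

lemma isoperimetric_mono:
  assumes "isoperimetric V E \<gamma>" "\<gamma>' \<le> \<gamma>"
  shows "isoperimetric V E \<gamma>'"
  unfolding isoperimetric_def
proof (intro allI impI)
  fix A assume "A \<subseteq> V"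
  have "\<gamma>' * (real (card A) * real (card (V - A)) / real (card V))
      \<le> \<gamma> * (real (card A) * real (card (V - A)) / real (card V))"
    using assms(2) by (intro mult_right_mono) auto
  then show "\<gamma>' * real (card A) * real (card (V - A)) / real (card V) \<le> real (card (edge_boundary V E A))"
    using isoperimetricD[OF assms(1) \<open>A \<subseteq> V\<close>] by simp
qed

lemma isoperimetric_half:
  assumes "isoperimetric V E \<beta>" "finite V" "A \<subseteq> V" "2 * card A \<le> card V"
  shows "\<beta> * real (card A) / 2 \<le> real (card (edge_boundary V E A))"
proof (cases "\<beta> \<le> 0 \<or> A = {}")
  case True
  then have "\<beta> * real (card A) \<le> 0" by (auto simp: mult_nonpos_nonneg)
  then show ?thesis by simp
next
  case False
  then have pos: "\<beta> > 0" "card V > 0"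
    using assms(2,3) card_gt_0_iff by fastforce+
  have "real (card V) / 2 \<le> real (card (V - A))"
    using assms(4) card_Diff_subset[OF finite_subset[OF assms(3,2)] assms(3)] by simp
  then have "\<beta> * real (card A) / 2 \<le> \<beta> * real (card A) * real (card (V - A)) / real (card V)"
    using pos by (simp add: field_simps mult_left_mono)
  also have "\<dots> \<le> real (card (edge_boundary V E A))"
    by (rule isoperimetricD[OF assms(1,3)])
  finally show ?thesis .
qed

text \<open>For the indicator s of a set S, line_pairs m V s i counts the pairs (u, u[i := c])
  with u \<in> S and u[i := c] \<notin> S.\<close>

definition line_pairs :: "nat \<Rightarrow> (nat \<Rightarrow> 'a set) \<Rightarrow> ('a list \<Rightarrow> real) \<Rightarrow> nat \<Rightarrow> real" where
  "line_pairs m V s i = (\<Sum>u\<in>prod_V m V. \<Sum>c\<in>V i. s u * (1 - s (u[i := c])))"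

lemma line_pairs_Suc:
  assumes "i < m"
  shows "line_pairs (Suc m) V s i = (\<Sum>c\<in>V m. line_pairs m V (\<lambda>w. s (w @ [c])) i)"
proof -
  have "line_pairs (Suc m) V s i
      = (\<Sum>w\<in>prod_V m V. \<Sum>c\<in>V m. \<Sum>c'\<in>V i. s (w @ [c]) * (1 - s (w[i := c'] @ [c])))"
    unfolding line_pairs_def sum_prod_V_Suc
    by (intro sum.cong refl) (use assms prod_V_length in \<open>auto simp: list_update_append\<close>)
  then show ?thesis
    unfolding line_pairs_def by (simp add: sum.swap[of _ "V m"])
qed

lemma line_pairs_Suc_last:
  "line_pairs (Suc m) V s m = (\<Sum>w\<in>prod_V m V. \<Sum>c\<in>V m. \<Sum>c'\<in>V m. s (w @ [c]) * (1 - s (w @ [c'])))"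
  unfolding line_pairs_def sum_prod_V_Suc
  by (intro sum.cong refl) (metis prod_V_length list_update_length)

lemma zero_one_cut_triangle:
  fixes a b c :: real
  assumes "a = 0 \<or> a = 1" "b = 0 \<or> b = 1" "c = 0 \<or> c = 1"
  shows "a * (1 - b) \<le> a * (1 - c) + c * (1 - b)"
  using assms by (elim disjE) simp_all

text \<open>Route each pair (w c, w' c') through w' c: first along the first m coordinates, then along
  the last one.\<close>

lemma sum_times_sum_compl_prod_V_Suc_le:
  assumes "\<forall>x. s x = 0 \<or> s x = 1"
  shows "(\<Sum>x\<in>prod_V (Suc m) V. s x) * (\<Sum>y\<in>prod_V (Suc m) V. 1 - s y)
     \<le> real (card (V m)) * (\<Sum>c\<in>V m. (\<Sum>w\<in>prod_V m V. s (w @ [c])) * (\<Sum>w\<in>prod_V m V. 1 - s (w @ [c])))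
       + real (card (prod_V m V)) * line_pairs (Suc m) V s m"
proof -
  let ?P = "prod_V m V" and ?C = "V m"
  have "(\<Sum>x\<in>prod_V (Suc m) V. s x) * (\<Sum>y\<in>prod_V (Suc m) V. 1 - s y)
      = (\<Sum>w\<in>?P. \<Sum>w'\<in>?P. \<Sum>c\<in>?C. \<Sum>c'\<in>?C. s (w @ [c]) * (1 - s (w' @ [c'])))"
    unfolding sum_prod_V_Suc by (simp add: sum_product)
  also have "\<dots> \<le> (\<Sum>w\<in>?P. \<Sum>w'\<in>?P. \<Sum>c\<in>?C. \<Sum>c'\<in>?C.
       s (w @ [c]) * (1 - s (w' @ [c])) + s (w' @ [c]) * (1 - s (w' @ [c'])))"
    by (intro sum_mono zero_one_cut_triangle; use assms in blast)
  also have "\<dots> = real (card ?C) * (\<Sum>w\<in>?P. \<Sum>c\<in>?C. \<Sum>w'\<in>?P. s (w @ [c]) * (1 - s (w' @ [c])))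
      + real (card ?P) * line_pairs (Suc m) V s m"
    unfolding line_pairs_Suc_last sum.distrib
    by (simp add: sum_distrib_left sum.swap[of _ ?P ?C])
  also have "(\<Sum>w\<in>?P. \<Sum>c\<in>?C. \<Sum>w'\<in>?P. s (w @ [c]) * (1 - s (w' @ [c])))
      = (\<Sum>c\<in>?C. (\<Sum>w\<in>?P. s (w @ [c])) * (\<Sum>w\<in>?P. 1 - s (w @ [c])))"
    unfolding sum_product by (rule sum.swap)
  finally show ?thesis .
qed

lemma sum_times_sum_compl_le_line_pairs:
  assumes "\<forall>i<m. finite (V i) \<and> V i \<noteq> {}" "\<forall>x. s x = 0 \<or> s x = 1"
  shows "(\<Sum>x\<in>prod_V m V. s x) * (\<Sum>y\<in>prod_V m V. 1 - s y)
     \<le> (\<Sum>i<m. real (card (prod_V m V)) / real (card (V i)) * line_pairs m V s i)"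
  using assms
proof (induction m arbitrary: s)
  case 0
  have "prod_V 0 V = {[]}" unfolding prod_V_def by auto
  moreover have "s [] = 0 \<or> s [] = 1" using "0.prems" by blast
  ultimately show ?case by (elim disjE) simp_all
next
  case (Suc m)
  let ?P = "prod_V m V" and ?C = "V m"
  let ?p = "real (card ?P)" and ?q = "real (card ?C)"
  have q: "?q > 0" using Suc.prems(1) by (simp add: card_gt_0_iff)
  have "(\<Sum>x\<in>prod_V (Suc m) V. s x) * (\<Sum>y\<in>prod_V (Suc m) V. 1 - s y)
     \<le> ?q * (\<Sum>c\<in>?C. (\<Sum>w\<in>?P. s (w @ [c])) * (\<Sum>w\<in>?P. 1 - s (w @ [c]))) + ?p * line_pairs (Suc m) V s m"
    using Suc.prems(2) by (rule sum_times_sum_compl_prod_V_Suc_le)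
  also have "?q * (\<Sum>c\<in>?C. (\<Sum>w\<in>?P. s (w @ [c])) * (\<Sum>w\<in>?P. 1 - s (w @ [c])))
      \<le> ?q * (\<Sum>c\<in>?C. \<Sum>i<m. ?p / real (card (V i)) * line_pairs m V (\<lambda>w. s (w @ [c])) i)"
    using q Suc.IH Suc.prems by (intro mult_left_mono sum_mono) auto
  also have "\<dots> = (\<Sum>i<m. real (card (prod_V (Suc m) V)) / real (card (V i)) * line_pairs (Suc m) V s i)"
    by (subst sum.swap) (simp add: sum_distrib_left sum_divide_distrib line_pairs_Suc card_prod_V_Suc mult_ac)
  also have "?p * line_pairs (Suc m) V s m
      = real (card (prod_V (Suc m) V)) / real (card (V m)) * line_pairs (Suc m) V s m"
    using q by (simp add: card_prod_V_Suc)
  finally show ?case by simp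
qed

lemma sum_card_out_neighbours_le:
  assumes "\<forall>i<m. finite (V i)" "\<forall>i<m. simple_graph (V i) (E i)" "x \<in> prod_V m V"
  shows "(\<Sum>i<m. card {c \<in> V i. E i (x ! i) c \<and> x[i := c] \<notin> S})
       \<le> card {y \<in> prod_V m V - S. prod_E m V E x y}"
proof -
  let ?C = "\<lambda>i. {c \<in> V i. E i (x ! i) c \<and> x[i := c] \<notin> S}"
  let ?A = "\<lambda>i. (\<lambda>c. x[i := c]) ` ?C i"
  have len: "length x = m" using assms(3) prod_V_length by blast
  have inj: "inj_on (\<lambda>c. x[i := c]) (?C i)" if "i < m" for i
    by (rule inj_onI) (metis len nth_list_update_eq that)
  have disjoint: "?A i \<inter> ?A j = {}" if "i < m" "j < m" "i \<noteq> j" for i j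
  proof -
    have "x[i := c] \<noteq> x[j := d]" if "c \<in> ?C i" for c d
    proof -
      have "c \<noteq> x ! i"
        using that simple_graphD(4)[of "V i" "E i" "x ! i" c] assms(2) \<open>i < m\<close> by auto
      then have "x[i := c] ! i \<noteq> x[j := d] ! i" using \<open>i \<noteq> j\<close> \<open>i < m\<close> len by simp
      then show ?thesis by metis
    qed
    then show ?thesis by blast
  qed
  have "x[i := c] \<in> prod_V m V - S \<and> prod_E m V E x (x[i := c])" if "i < m" "c \<in> ?C i" for i c
  proof -
    have "prod_E m V E (x[i := x ! i]) (x[i := c])"
      using prod_E_update[of x m V i E "x ! i" c] assms(2,3) that by auto
    then show ?thesis using prod_V_update[OF assms(3)] that by auto
  qed
  then have "(\<Union>i<m. ?A i) \<subseteq> {y \<in> prod_V m V - S. prod_E m V E x y}"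
    by blast
  then have "card (\<Union>i<m. ?A i) \<le> card {y \<in> prod_V m V - S. prod_E m V E x y}"
    using finite_prod_V[OF assms(1)] by (intro card_mono) auto
  moreover have "card (\<Union>i<m. ?A i) = (\<Sum>i<m. card (?C i))"
    using assms(1) disjoint by (subst card_UN_disjoint) (auto simp: card_image inj)
  ultimately show ?thesis by simp
qed

definition line_trace :: "(nat \<Rightarrow> 'a set) \<Rightarrow> 'a list set \<Rightarrow> 'a list \<Rightarrow> nat \<Rightarrow> 'a set" where
  "line_trace V S w i = {c \<in> V i. w[i := c] \<in> S}"

definition edge_boundary_along ::
    "nat \<Rightarrow> (nat \<Rightarrow> 'a set) \<Rightarrow> (nat \<Rightarrow> 'a \<Rightarrow> 'a \<Rightarrow> bool) \<Rightarrow> 'a list set \<Rightarrow> nat \<Rightarrow> real" where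
  "edge_boundary_along m V E S i =
     (\<Sum>x\<in>prod_V m V. of_bool (x \<in> S) * real (card {c \<in> V i. E i (x ! i) c \<and> x[i := c] \<notin> S}))"

lemma line_trace_subset: "line_trace V S w i \<subseteq> V i"
  unfolding line_trace_def by blast

lemma edge_boundary_along_eq:
  assumes "i < m" "d \<in> V i" "finite (V i)"
  shows "edge_boundary_along m V E S i = (\<Sum>w\<in>prod_slice m V i d. real (card (edge_boundary (V i) (E i) (line_trace V S w i))))"
proof -
  have "(\<Sum>c\<in>V i. of_bool (w[i := c] \<in> S) *
          real (card {c' \<in> V i. E i (w[i := c] ! i) c' \<and> w[i := c'] \<notin> S}))
      = real (card (edge_boundary (V i) (E i) (line_trace V S w i)))"
    if "w \<in> prod_slice m V i d" for w
  proof -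
    have "length w = m" using that prod_V_length by (auto simp: prod_slice_def)
    have trace: "line_trace V S w i = V i \<inter> {c. w[i := c] \<in> S}"
      by (auto simp: line_trace_def)
    have out: "{c' \<in> V i. E i c c' \<and> w[i := c'] \<notin> S} = {c' \<in> V i - line_trace V S w i. E i c c'}"
      for c by (auto simp: line_trace_def)
    have "(\<Sum>c\<in>V i. of_bool (w[i := c] \<in> S) *
          real (card {c' \<in> V i. E i (w[i := c] ! i) c' \<and> w[i := c'] \<notin> S}))
        = (\<Sum>c\<in>line_trace V S w i. real (card {c' \<in> V i. E i c c' \<and> w[i := c'] \<notin> S}))"
      unfolding trace using assms(1,3) \<open>length w = m\<close> by simp
    also have "\<dots> = (\<Sum>c\<in>line_trace V S w i. real (card {c' \<in> V i - line_trace V S w i. E i c c'}))"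
      by (simp only: out)
    also have "\<dots> = real (card (edge_boundary (V i) (E i) (line_trace V S w i)))"
      using card_edge_boundary_eq_sum[of "V i" "line_trace V S w i" "E i"] assms(3)
      by (simp add: line_trace_def)
    finally show ?thesis .
  qed
  then show ?thesis
    unfolding edge_boundary_along_def by (simp add: sum_prod_V_slice[of i m d V, OF assms(1,2)])
qed

lemma line_pairs_of_bool_eq:
  assumes "i < m" "d \<in> V i" "finite (V i)"
  shows "line_pairs m V (\<lambda>u. of_bool (u \<in> S)) i
    = (\<Sum>w\<in>prod_slice m V i d. real (card (line_trace V S w i)) * real (card (V i - line_trace V S w i)))"
proof -
  have "(\<Sum>c\<in>V i. of_bool (w[i := c] \<in> S)) = real (card (line_trace V S w i))"
    and "(\<Sum>c\<in>V i. 1 - of_bool (w[i := c] \<in> S)) = real (card (V i - line_trace V S w i))" for w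
  proof -
    have "V i - line_trace V S w i = V i \<inter> {c. w[i := c] \<notin> S}"
      by (auto simp: line_trace_def)
    moreover have "1 - of_bool (w[i := c] \<in> S) = (of_bool (w[i := c] \<notin> S) :: real)" for c
      by simp
    ultimately show "(\<Sum>c\<in>V i. 1 - of_bool (w[i := c] \<in> S)) = real (card (V i - line_trace V S w i))"
      using assms(3) by simp
  next
    have "V i \<inter> {c. w[i := c] \<in> S} = line_trace V S w i"
      by (auto simp: line_trace_def)
    then show "(\<Sum>c\<in>V i. of_bool (w[i := c] \<in> S)) = real (card (line_trace V S w i))"
      using assms(3) by simp
  qed
  then show ?thesis
    unfolding line_pairs_def sum_prod_V_slice[of i m d V, OF assms(1,2)]
    by (simp add: sum_product[symmetric])
qed

lemma line_pairs_le_edge_boundary_along: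
  assumes "isoperimetric (V i) (E i) \<gamma>" "i < m" "finite (V i)" "V i \<noteq> {}"
  shows "\<gamma> / real (card (V i)) * line_pairs m V (\<lambda>u. of_bool (u \<in> S)) i \<le> edge_boundary_along m V E S i"
proof -
  obtain d where d: "d \<in> V i" using assms(4) by blast
  have "\<gamma> / real (card (V i)) * line_pairs m V (\<lambda>u. of_bool (u \<in> S)) i
      = (\<Sum>w\<in>prod_slice m V i d. \<gamma> * real (card (line_trace V S w i))
           * real (card (V i - line_trace V S w i)) / real (card (V i)))"
    unfolding line_pairs_of_bool_eq[of i m d V S, OF assms(2) d assms(3)] sum_distrib_left
    by (simp add: mult.assoc)
  also have "\<dots> \<le> (\<Sum>w\<in>prod_slice m V i d. real (card (edge_boundary (V i) (E i) (line_trace V S w i))))"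
    by (intro sum_mono isoperimetricD[OF assms(1)] line_trace_subset)
  also have "\<dots> = edge_boundary_along m V E S i"
    using edge_boundary_along_eq[of i m d V E S, OF assms(2) d assms(3)] by simp
  finally show ?thesis .
qed

lemma sum_edge_boundary_along_le:
  assumes "\<forall>i<m. finite (V i)" "\<forall>i<m. simple_graph (V i) (E i)" "S \<subseteq> prod_V m V"
  shows "(\<Sum>i<m. edge_boundary_along m V E S i) \<le> real (card (edge_boundary (prod_V m V) (prod_E m V E) S))"
proof -
  have fin: "finite (prod_V m V)" using finite_prod_V[OF assms(1)] .
  have "(\<Sum>i<m. edge_boundary_along m V E S i)
      = (\<Sum>x\<in>prod_V m V. of_bool (x \<in> S) * (\<Sum>i<m. real (card {c \<in> V i. E i (x ! i) c \<and> x[i := c] \<notin> S})))"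
    unfolding edge_boundary_along_def sum_distrib_left by (rule sum.swap)
  also have "\<dots> = (\<Sum>x\<in>S. \<Sum>i<m. real (card {c \<in> V i. E i (x ! i) c \<and> x[i := c] \<notin> S}))"
    using fin assms(3) by (simp add: Int_absorb1)
  also have "\<dots> \<le> (\<Sum>x\<in>S. real (card {y \<in> prod_V m V - S. prod_E m V E x y}))"
  proof (intro sum_mono)
    fix x assume "x \<in> S"
    then have "(\<Sum>i<m. card {c \<in> V i. E i (x ! i) c \<and> x[i := c] \<notin> S})
        \<le> card {y \<in> prod_V m V - S. prod_E m V E x y}"
      using sum_card_out_neighbours_le[OF assms(1,2)] assms(3) by blast
    then show "(\<Sum>i<m. real (card {c \<in> V i. E i (x ! i) c \<and> x[i := c] \<notin> S}))
        \<le> real (card {y \<in> prod_V m V - S. prod_E m V E x y})"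
      by (simp only: of_nat_sum[symmetric] of_nat_le_iff)
  qed
  also have "\<dots> = real (card (edge_boundary (prod_V m V) (prod_E m V E) S))"
    using card_edge_boundary_eq_sum[OF fin finite_subset[OF assms(3) fin]] by simp
  finally show ?thesis .
qed

lemma isoperimetric_prod:
  assumes "\<forall>i<m. finite (V i) \<and> V i \<noteq> {}" "\<forall>i<m. simple_graph (V i) (E i)"
    and "\<forall>i<m. isoperimetric (V i) (E i) \<gamma>" "\<gamma> \<ge> 0"
  shows "isoperimetric (prod_V m V) (prod_E m V E) \<gamma>"
  unfolding isoperimetric_def
proof (intro allI impI)
  fix S assume S: "S \<subseteq> prod_V m V"
  let ?P = "prod_V m V" and ?s = "\<lambda>u. of_bool (u \<in> S) :: real"
  have fin: "finite ?P" using finite_prod_V[of m V] assms(1) by blast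
  have pos: "card ?P > 0"
    unfolding card_prod_V using assms(1) by (intro prod_pos) (simp add: card_gt_0_iff)
  have "(\<Sum>x\<in>?P. ?s x) = real (card S)"
    using S fin by (simp add: Int_absorb1)
  moreover have "(\<Sum>x\<in>?P. 1 - ?s x) = real (card (?P - S))"
  proof -
    have "(\<Sum>x\<in>?P. 1 - ?s x) = (\<Sum>x\<in>?P. of_bool (x \<notin> S))"
      by (intro sum.cong) auto
    moreover have "?P \<inter> {x. x \<notin> S} = ?P - S" by blast
    ultimately show ?thesis using fin by simp
  qed
  ultimately have "real (card S) * real (card (?P - S))
      \<le> (\<Sum>i<m. real (card ?P) / real (card (V i)) * line_pairs m V ?s i)"
    using sum_times_sum_compl_le_line_pairs[of m V ?s] assms(1) by simp
  then have "\<gamma> * real (card S) * real (card (?P - S)) / real (card ?P)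
      \<le> \<gamma> * (\<Sum>i<m. real (card ?P) / real (card (V i)) * line_pairs m V ?s i) / real (card ?P)"
    using assms(4) by (simp add: divide_right_mono mult_left_mono mult.assoc)
  also have "\<dots> = (\<Sum>i<m. \<gamma> / real (card (V i)) * line_pairs m V ?s i)"
    using pos by (simp add: sum_distrib_left sum_divide_distrib)
  also have "\<dots> \<le> (\<Sum>i<m. edge_boundary_along m V E S i)"
    by (intro sum_mono line_pairs_le_edge_boundary_along) (use assms(1,3) in auto)
  also have "\<dots> \<le> real (card (edge_boundary ?P (prod_E m V E) S))"
    using sum_edge_boundary_along_le assms(1,2) S by blast
  finally show "\<gamma> * real (card S) * real (card (?P - S)) / real (card ?P)
      \<le> real (card (edge_boundary ?P (prod_E m V E) S))" .
qed

section \<open>Isoperimetric constants of the factors\<close>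

lemma edge_iso_nonneg:
  assumes "simple_graph V E" "2 \<le> card V"
  shows "0 \<le> edge_iso V E"
proof -
  let ?F = "{S. S \<subseteq> V \<and> 0 < card S \<and> 2 * card S \<le> card V}"
  have "finite ?F" using simple_graph_finite[OF assms(1)] by simp
  moreover obtain v where "v \<in> V" using assms(2) by fastforce
  then have "{v} \<in> ?F" using assms(2) by simp
  ultimately show ?thesis
    unfolding edge_iso_def by (subst Min_ge_iff) auto
qed

lemma isoperimetric_edge_iso:
  assumes "simple_graph V E" "2 \<le> card V"
  shows "isoperimetric V E (edge_iso V E)"
  unfolding isoperimetric_def
proof (intro allI impI)
  fix A assume A: "A \<subseteq> V"
  let ?F = "{S. S \<subseteq> V \<and> 0 < card S \<and> 2 * card S \<le> card V}"
  let ?\<iota> = "edge_iso V E"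
  have fin: "finite V" using assms(1) by (rule simple_graph_finite)
  have ratio: "?\<iota> * real (card S) \<le> real (card (edge_boundary V E S))" if "S \<in> ?F" for S
  proof -
    have "?\<iota> \<le> real (card (edge_boundary V E S)) / real (card S)"
      unfolding edge_iso_def using fin that by (intro Min_le) auto
    then show ?thesis using that by (simp add: field_simps)
  qed
  have \<iota>: "0 \<le> ?\<iota>" using edge_iso_nonneg[OF assms] .
  have card: "card (V - A) = card V - card A" "card A \<le> card V" "card V > 0"
    using card_Diff_subset[OF finite_subset[OF A fin] A] card_mono[OF fin A] assms(2) by auto
  \<comment> \<open>Apply the definition of edge_iso to the smaller of A and V - A.\<close>
  show "?\<iota> * real (card A) * real (card (V - A)) / real (card V) \<le> real (card (edge_boundary V E A))"
  proof (cases "card A = 0 \<or> card A = card V")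
    case False
    show ?thesis
    proof (cases "2 * card A \<le> card V")
      case True
      then have "?\<iota> * real (card A) \<le> real (card (edge_boundary V E A))"
        using ratio A False by auto
      moreover have "?\<iota> * real (card A) * (real (card (V - A)) / real (card V)) \<le> ?\<iota> * real (card A) * 1"
        using \<iota> card by (intro mult_left_mono) auto
      ultimately show ?thesis by simp
    next
      case False
      then have "?\<iota> * real (card (V - A)) \<le> real (card (edge_boundary V E A))"
        using ratio[of "V - A"] card \<open>\<not> (card A = 0 \<or> card A = card V)\<close>
          card_edge_boundary_compl[OF assms(1) A] by auto
      moreover have "?\<iota> * real (card (V - A)) * (real (card A) / real (card V)) \<le> ?\<iota> * real (card (V - A)) * 1"
        using \<iota> card by (intro mult_left_mono) auto
      ultimately show ?thesis by (simp add: mult_ac)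
    qed
  qed (use card in auto)
qed

lemma mult_diff_le_square_div_4: "(x::real) * (y - x) \<le> y * y / 4"
proof -
  have "0 \<le> (y - 2 * x)^2" by simp
  then show ?thesis by (simp add: power2_eq_square algebra_simps)
qed

lemma isoperimetric_of_boundary_bound:
  assumes "simple_graph V E" "card V \<le> N"
    and "\<And>A. A \<subseteq> V \<Longrightarrow> A \<noteq> {} \<Longrightarrow> A \<noteq> V \<Longrightarrow> b \<le> card (edge_boundary V E A)"
  shows "isoperimetric V E (4 * real b / real N)"
  unfolding isoperimetric_def
proof (intro allI impI)
  fix A assume A: "A \<subseteq> V"
  have fin: "finite V" using assms(1) by (rule simple_graph_finite)
  show "4 * real b / real N * real (card A) * real (card (V - A)) / real (card V)
      \<le> real (card (edge_boundary V E A))"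
  proof (cases "A = {} \<or> A = V")
    case False
    then have n: "0 < card V" "0 < real N" using fin A assms(2) by (auto simp: card_gt_0_iff)
    have "real (card A) * real (card (V - A)) \<le> real (card V) * real (card V) / 4"
    proof -
      have "real (card (V - A)) = real (card V) - real (card A)"
        using card_Diff_subset[OF finite_subset[OF A fin] A] card_mono[OF fin A] by (simp add: of_nat_diff)
      then show ?thesis by (simp only: mult_diff_le_square_div_4)
    qed
    then have "4 * real b / real N * (real (card A) * real (card (V - A))) / real (card V)
        \<le> 4 * real b / real N * (real (card V) * real (card V) / 4) / real (card V)"
      using n by (intro divide_right_mono mult_left_mono) auto
    then have "4 * real b / real N * real (card A) * real (card (V - A)) / real (card V)
        \<le> 4 * real b / real N * (real (card V) * real (card V) / 4) / real (card V)"
      by (simp only: mult.assoc)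
    also have "\<dots> = real b * (real (card V) / real N)"
      using n by (simp add: field_simps)
    also have "\<dots> \<le> real b * 1"
      using n assms(2) by (intro mult_left_mono) auto
    also have "\<dots> \<le> real (card (edge_boundary V E A))"
      using assms(3)[OF A] False by simp
    finally show ?thesis .
  qed auto
qed

lemma card_edge_boundary_ge_1:
  assumes "simple_graph V E" "connected_graph V E" "A \<subseteq> V" "A \<noteq> {}" "A \<noteq> V"
  shows "1 \<le> card (edge_boundary V E A)"
proof -
  obtain a b where ab: "a \<in> A" "b \<in> V" "b \<notin> A" using assms(3-5) by blast
  have "E\<^sup>*\<^sup>* a b" using assms(2,3) ab unfolding connected_graph_def by blast
  then have "\<exists>x y. x \<in> A \<and> y \<notin> A \<and> E x y"
    using ab(3)
  proof (induction rule: rtranclp_induct)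
    case (step y z)
    then show ?case by (cases "y \<in> A") blast+
  qed (use ab(1) in blast)
  then obtain x y where xy: "x \<in> A" "y \<notin> A" "E x y" by blast
  moreover have "y \<in> V" using simple_graphD(2)[OF assms(1) xy(3)] .
  ultimately have "(x, y) \<in> edge_boundary V E A"
    unfolding edge_boundary_def by blast
  moreover have "finite (edge_boundary V E A)"
    using simple_graph_finite[OF assms(1)] assms(3) by (rule finite_edge_boundary)
  ultimately show ?thesis using card_gt_0_iff[of "edge_boundary V E A"] by fastforce
qed

section \<open>The lower bound: a robber in the giant component\<close>

definition component :: "('v \<Rightarrow> 'v \<Rightarrow> bool) \<Rightarrow> 'v set \<Rightarrow> 'v \<Rightarrow> 'v set" where
  "component E C x = {y. robber_reach E C x y}"

definition closed_nbhd :: "'v set \<Rightarrow> ('v \<Rightarrow> 'v \<Rightarrow> bool) \<Rightarrow> 'v set \<Rightarrow> 'v set" where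
  "closed_nbhd V E C = C \<union> {y \<in> V. \<exists>c\<in>C. E c y}"

lemma self_in_component: "x \<in> component E C x"
  unfolding component_def robber_reach_def by simp

lemma component_subset:
  assumes "simple_graph V E" "x \<in> V"
  shows "component E C x \<subseteq> V"
proof
  fix y assume "y \<in> component E C x"
  then have "robber_reach E C x y" by (simp add: component_def)
  then show "y \<in> V"
    unfolding robber_reach_def
    by (induction rule: rtranclp_induct) (use assms simple_graphD in auto)
qed

lemma component_disjoint:
  assumes "x \<notin> C"
  shows "component E C x \<inter> C = {}"
proof -
  have "y \<notin> C" if "robber_reach E C x y" for y
    using that unfolding robber_reach_def
    by (induction rule: rtranclp_induct) (use assms in auto)
  then show ?thesis by (auto simp: component_def)
qed

lemma component_antimono:
  assumes "C \<subseteq> C'"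
  shows "component E C' x \<subseteq> component E C x"
  unfolding component_def robber_reach_def
  by (auto elim!: rtranclp_mono[THEN predicate2D, rotated] dest: subsetD[OF assms])

lemma component_eq:
  assumes "simple_graph V E" "y \<in> component E C x"
  shows "component E C y = component E C x"
proof -
  have "symp (\<lambda>x y. E x y \<and> x \<notin> C \<and> y \<notin> C)"
    unfolding symp_def using simple_graphD(3)[OF assms(1)] by blast
  then have "symp (robber_reach E C)"
    unfolding robber_reach_def by (rule symp_rtranclp)
  moreover have "robber_reach E C x y" using assms(2) by (simp add: component_def)
  ultimately show ?thesis
    unfolding component_def robber_reach_def by (auto dest: sympD intro: rtranclp_trans)
qed

lemma card_edge_boundary_component:
  assumes "simple_graph V E" "x \<in> V - D"
  shows "card (edge_boundary V E (component E D x)) = (\<Sum>u\<in>component E D x. card {y \<in> D. E u y})"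
proof -
  let ?T = "component E D x"
  have T: "?T \<subseteq> V" "?T \<inter> D = {}"
    using component_subset[OF assms(1), of x D] component_disjoint[of x D E] assms(2) by auto
  have "{y \<in> V - ?T. E u y} = {y \<in> D. E u y}" if "u \<in> ?T" for u
  proof (intro set_eqI iffI)
    fix y assume y: "y \<in> {y \<in> V - ?T. E u y}"
    have "robber_reach E D x u" using that by (simp add: component_def)
    then have "y \<in> ?T" if "y \<notin> D"
      using y that \<open>u \<in> ?T\<close> T unfolding component_def robber_reach_def
      by (auto intro: rtranclp.rtrancl_into_rtrancl)
    then show "y \<in> {y \<in> D. E u y}" using y by blast
  qed (use T simple_graphD(2)[OF assms(1)] in blast)
  then show ?thesis
    using card_edge_boundary_eq_sum[OF simple_graph_finite[OF assms(1)] finite_subset[OF T(1)]]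
      simple_graph_finite[OF assms(1)] by simp
qed

lemma sum_class_averages:
  fixes g :: "'v \<Rightarrow> real"
  assumes "finite W" "\<And>x. x \<in> W \<Longrightarrow> K x \<subseteq> W" "\<And>x. x \<in> W \<Longrightarrow> x \<in> K x"
    and "\<And>x y. x \<in> W \<Longrightarrow> y \<in> K x \<Longrightarrow> K y = K x"
  shows "(\<Sum>x\<in>W. (\<Sum>u\<in>K x. g u) / real (card (K x))) = (\<Sum>u\<in>W. g u)"
proof -
  have mem: "x \<in> K u \<longleftrightarrow> u \<in> K x" if "x \<in> W" "u \<in> W" for x u
    using assms(3,4) that by metis
  have "(\<Sum>u\<in>K x. g u) / real (card (K x)) = (\<Sum>u\<in>W. of_bool (x \<in> K u) * (g u / real (card (K u))))"
    if "x \<in> W" for x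
  proof -
    have "W \<inter> {u. x \<in> K u} = K x"
      using assms(2)[OF that] mem[OF that] by blast
    then have "(\<Sum>u\<in>W. of_bool (x \<in> K u) * (g u / real (card (K u))))
        = (\<Sum>u\<in>K x. g u / real (card (K u)))"
      by (simp only: sum_of_bool_mult_eq[OF assms(1)])
    also have "\<dots> = (\<Sum>u\<in>K x. g u / real (card (K x)))"
      by (intro sum.cong refl) (metis assms(4) that)
    finally show ?thesis by (simp add: sum_divide_distrib)
  qed
  then have "(\<Sum>x\<in>W. (\<Sum>u\<in>K x. g u) / real (card (K x)))
      = (\<Sum>x\<in>W. \<Sum>u\<in>W. of_bool (x \<in> K u) * (g u / real (card (K u))))"
    by (rule sum.cong[OF refl])
  also have "\<dots> = (\<Sum>u\<in>W. \<Sum>x\<in>W. of_bool (x \<in> K u) * (g u / real (card (K u))))"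
    by (rule sum.swap)
  also have "\<dots> = (\<Sum>u\<in>W. g u)"
  proof (intro sum.cong refl)
    fix u assume u: "u \<in> W"
    have "W \<inter> {x. x \<in> K u} = K u" using assms(2) u by blast
    then have "(\<Sum>x\<in>W. of_bool (x \<in> K u) * (g u / real (card (K u))))
        = real (card (K u)) * (g u / real (card (K u)))"
      by (simp only: sum_of_bool_mult_eq[OF assms(1)] sum_constant)
    moreover have "card (K u) > 0"
      using assms(3)[OF u] finite_subset[OF assms(2)[OF u] assms(1)] by (auto simp: card_gt_0_iff)
    ultimately show "(\<Sum>x\<in>W. of_bool (x \<in> K u) * (g u / real (card (K u)))) = g u"
      by simp
  qed
  finally show ?thesis .
qed

lemma sum_card_filter_swap:
  assumes "finite A" "finite B"
  shows "(\<Sum>x\<in>A. card {y \<in> B. R x y}) = (\<Sum>y\<in>B. card {x \<in> A. R x y})"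
proof -
  have filter: "X \<inter> {z. P z} = {z \<in> X. P z}" for X and P :: "_ \<Rightarrow> bool"
    by blast
  have "(\<Sum>x\<in>A. \<Sum>y\<in>B. of_bool (R x y) :: nat) = (\<Sum>y\<in>B. \<Sum>x\<in>A. of_bool (R x y))"
    by (rule sum.swap)
  then show ?thesis
    using assms by (simp only: sum_of_bool_eq filter of_nat_id)
qed

lemma card_closed_nbhd_diff_le:
  assumes "finite V" "\<forall>v\<in>V. degree V E v \<le> \<Delta>" "C \<subseteq> V"
  shows "card (closed_nbhd V E C - C) \<le> card C * \<Delta>"
proof -
  have "closed_nbhd V E C - C \<subseteq> (\<Union>c\<in>C. {y \<in> V. E c y})"
    unfolding closed_nbhd_def by blast
  then have "card (closed_nbhd V E C - C) \<le> card (\<Union>c\<in>C. {y \<in> V. E c y})"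
    by (intro card_mono finite_subset[OF _ assms(1)]) auto
  also have "\<dots> \<le> (\<Sum>c\<in>C. card {y \<in> V. E c y})"
    by (rule card_UN_le) (use assms(1,3) finite_subset in blast)
  also have "\<dots> \<le> card C * \<Delta>"
    using sum_bounded_above[of C "\<lambda>c. card {y \<in> V. E c y}" \<Delta>] assms(2,3)
    by (auto simp: degree_def)
  finally show ?thesis .
qed

text \<open>Every vertex of closed_nbhd V E C outside C has a neighbour in C, so at most
  \<Delta> - 1 neighbours outside closed_nbhd V E C; vertices of C have none.\<close>

lemma sum_card_edges_into_closed_nbhd_le:
  assumes "simple_graph V E" "\<forall>v\<in>V. degree V E v \<le> \<Delta>" "C \<subseteq> V"
  shows "(\<Sum>u\<in>V - closed_nbhd V E C. card {y \<in> closed_nbhd V E C. E u y}) \<le> card C * \<Delta> * (\<Delta> - 1)"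
proof -
  let ?D = "closed_nbhd V E C" and ?W = "V - closed_nbhd V E C"
  have fin: "finite V" using assms(1) by (rule simple_graph_finite)
  have D: "C \<subseteq> ?D" "?D \<subseteq> V" using assms(3) unfolding closed_nbhd_def by auto
  have in_C: "card {u \<in> ?W. E u y} = 0" if "y \<in> C" for y
  proof -
    have "{u \<in> ?W. E u y} = {}"
      using that simple_graphD(3)[OF assms(1)] unfolding closed_nbhd_def by blast
    then show ?thesis by (simp only: card.empty)
  qed
  have in_D: "card {u \<in> ?W. E u y} \<le> \<Delta> - 1" if y: "y \<in> ?D - C" for y
  proof -
    obtain c where c: "c \<in> C" "E c y" "y \<in> V" using y unfolding closed_nbhd_def by blast
    have "{u \<in> ?W. E u y} \<subseteq> {u \<in> V. E y u} - {c}"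
      using D c(1) simple_graphD(3)[OF assms(1)] by blast
    moreover have "c \<in> {u \<in> V. E y u}"
      using simple_graphD(1,3)[OF assms(1) c(2)] by blast
    ultimately have "card {u \<in> ?W. E u y} \<le> card {u \<in> V. E y u} - 1"
      using fin by (metis (no_types, lifting) card_Diff_singleton card_mono finite_Diff
          finite_subset mem_Collect_eq subsetI)
    moreover have "card {u \<in> V. E y u} \<le> \<Delta>" using assms(2) c(3) by (simp add: degree_def)
    ultimately show ?thesis by linarith
  qed
  have "(\<Sum>u\<in>?W. card {y \<in> ?D. E u y}) = (\<Sum>y\<in>?D. card {u \<in> ?W. E u y})"
    using fin finite_subset[OF D(2) fin] by (intro sum_card_filter_swap) auto
  also have "\<dots> = (\<Sum>y\<in>?D - C. card {u \<in> ?W. E u y})"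
    using in_C D finite_subset[OF D(2) fin] by (intro sum.mono_neutral_right) auto
  also have "\<dots> \<le> card (?D - C) * (\<Delta> - 1)"
    using sum_bounded_above[of "?D - C" _ "\<Delta> - 1"] in_D by simp
  also have "\<dots> \<le> card C * \<Delta> * (\<Delta> - 1)"
    using card_closed_nbhd_diff_le[OF fin assms(2,3)] by simp
  finally show ?thesis .
qed

lemma card_le_card_outside_closed_nbhd:
  assumes "finite V" "\<forall>v\<in>V. degree V E v \<le> \<Delta>" "C \<subseteq> V"
  shows "card V \<le> card (V - closed_nbhd V E C) + card C * (1 + \<Delta>)"
proof -
  let ?D = "closed_nbhd V E C"
  have D: "C \<subseteq> ?D" "?D \<subseteq> V" using assms(3) unfolding closed_nbhd_def by auto
  have "card ?D = card C + card (?D - C)"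
    using card_Diff_subset[OF _ D(1)] card_mono[OF _ D(1)] finite_subset[OF D(2) assms(1)]
      finite_subset[OF D(1)] by simp
  moreover have "card V = card (V - ?D) + card ?D"
    using card_Diff_subset[OF _ D(2)] card_mono[OF _ D(2)] finite_subset[OF D(2) assms(1)] assms(1)
    by simp
  ultimately show ?thesis
    using card_closed_nbhd_diff_le[OF assms] by simp
qed

lemma card_gt_half_inter_nonempty:
  assumes "finite V" "A \<subseteq> V" "B \<subseteq> V" "card V < 2 * card A" "card V < 2 * card B"
  shows "A \<inter> B \<noteq> {}"
proof
  assume "A \<inter> B = {}"
  then have "card A + card B = card (A \<union> B)"
    using finite_subset[OF assms(2,1)] finite_subset[OF assms(3,1)] by (simp add: card_Un_disjoint)
  also have "\<dots> \<le> card V" using assms(1-3) by (intro card_mono) auto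
  finally show False using assms(4,5) by linarith
qed

lemma set_cop_step_subset_closed_nbhd:
  assumes "cop_step E cs cs'" "simple_graph V E"
  shows "set cs' \<subseteq> closed_nbhd V E (set cs)"
proof
  fix y assume "y \<in> set cs'"
  then obtain i where i: "i < length cs" "y = cs' ! i"
    using assms(1) by (auto simp: in_set_conv_nth cop_step_def)
  then have "y = cs ! i \<or> E (cs ! i) y"
    using assms(1) by (auto simp: cop_step_def)
  then show "y \<in> closed_nbhd V E (set cs)"
    using i simple_graphD(2)[OF assms(2)] unfolding closed_nbhd_def by auto
qed

locale isoperimetric_bounded_degree =
  fixes V :: "'v set" and E :: "'v \<Rightarrow> 'v \<Rightarrow> bool" and \<Delta> :: nat and \<beta> :: real
  assumes simple: "simple_graph V E"
    and degree_le: "\<forall>v\<in>V. degree V E v \<le> \<Delta>"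
    and isoperimetric: "isoperimetric V E \<beta>"
    and two_le_card: "2 \<le> card V"
begin

lemma finite_V: "finite V"
  using simple by (rule simple_graph_finite)

lemma isoperimetric_constant_le: "\<beta> \<le> 2 * real \<Delta>"
proof -
  obtain v where v: "v \<in> V" using two_le_card by fastforce
  then have "\<beta> * real (card {v}) / 2 \<le> real (card (edge_boundary V E {v}))"
    using isoperimetric_half[OF isoperimetric finite_V, of "{v}"] v two_le_card by simp
  then show ?thesis
    using card_edge_boundary_singleton[OF simple v] degree_le v by fastforce
qed

text \<open>If G - D has no component with more than half of the vertices, each component T
  satisfies \<beta> |T| / 2 \<le> |\<partial>T|; all edges of \<partial>T go to D, and summing over the components
  counts every edge between V - D and D once.\<close>

lemma edges_to_set_ge_if_components_small:
  assumes "D \<subseteq> V" "\<forall>x\<in>V - D. 2 * card (component E D x) \<le> card V"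
  shows "real (card (V - D)) * \<beta> / 2 \<le> (\<Sum>u\<in>V - D. real (card {y \<in> D. E u y}))"
proof -
  let ?g = "\<lambda>u. real (card {y \<in> D. E u y})"
  have comp: "component E D x \<subseteq> V - D" if "x \<in> V - D" for x
    using that component_subset[OF simple, of x D] component_disjoint[of x D E] by blast
  have average: "\<beta> / 2 \<le> (\<Sum>u\<in>component E D x. ?g u) / real (card (component E D x))"
    if x: "x \<in> V - D" for x
  proof -
    let ?T = "component E D x"
    have T: "?T \<subseteq> V" "card ?T > 0"
      using comp[OF x] self_in_component[of x E D] finite_subset[OF _ finite_V] card_gt_0_iff by blast+
    have "\<beta> * real (card ?T) / 2 \<le> real (card (edge_boundary V E ?T))"
      using assms(2) x by (intro isoperimetric_half[OF isoperimetric finite_V T(1)]) auto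
    also have "\<dots> = (\<Sum>u\<in>?T. ?g u)"
      using card_edge_boundary_component[OF simple x] by simp
    finally show ?thesis using T(2) by (simp add: field_simps)
  qed
  have "real (card (V - D)) * \<beta> / 2 = (\<Sum>x\<in>V - D. \<beta> / 2)" by simp
  also have "\<dots> \<le> (\<Sum>x\<in>V - D. (\<Sum>u\<in>component E D x. ?g u) / real (card (component E D x)))"
    by (rule sum_mono) (rule average)
  also have "\<dots> = (\<Sum>u\<in>V - D. ?g u)"
    using finite_V comp self_in_component component_eq[OF simple] by (intro sum_class_averages) auto
  finally show ?thesis .
qed

lemma giant_component:
  assumes few_cops: "4 * real k * (real \<Delta>)^2 < \<beta> * real (card V)"
    and C: "C \<subseteq> V" "card C \<le> k"
  shows "\<exists>x\<in>V - closed_nbhd V E C. card V < 2 * card (component E (closed_nbhd V E C) x)"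
proof (rule ccontr)
  assume "\<not> ?thesis"
  then have small: "\<forall>x\<in>V - closed_nbhd V E C. 2 * card (component E (closed_nbhd V E C) x) \<le> card V"
    by (auto simp: not_less)
  let ?W = "V - closed_nbhd V E C"
  have "0 \<le> 4 * real k * (real \<Delta>)^2" by simp
  then have "\<beta> * real (card V) > 0" using few_cops by linarith
  then have \<beta>: "\<beta> > 0" by (simp add: zero_less_mult_iff)
  then have \<Delta>: "\<Delta> \<ge> 1" using isoperimetric_constant_le by (cases \<Delta>) auto
  have "real (card ?W) * \<beta> / 2 \<le> (\<Sum>u\<in>?W. real (card {y \<in> closed_nbhd V E C. E u y}))"
    using C(1) small by (intro edges_to_set_ge_if_components_small) (auto simp: closed_nbhd_def)
  also have "\<dots> \<le> real (card C * \<Delta> * (\<Delta> - 1))"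
    using sum_card_edges_into_closed_nbhd_le[OF simple degree_le C(1)]
    by (simp only: of_nat_sum[symmetric] of_nat_le_iff)
  also have "\<dots> \<le> real (k * \<Delta> * (\<Delta> - 1))"
    using C(2) by (simp only: of_nat_le_iff mult_le_mono1)
  finally have edges: "real (card ?W) * \<beta> \<le> 2 * real k * real \<Delta> * (real \<Delta> - 1)"
    using \<Delta> by (simp add: of_nat_diff)
  have "card V \<le> card ?W + k * (1 + \<Delta>)"
    using card_le_card_outside_closed_nbhd[OF finite_V degree_le C(1)] mult_le_mono1[OF C(2)]
    by (meson add_left_mono le_trans)
  then have "real (card V) \<le> real (card ?W + k * (1 + \<Delta>))"
    by (simp only: of_nat_le_iff)
  then have "real (card V) \<le> real (card ?W) + real k * (1 + real \<Delta>)"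
    by (simp add: distrib_left)
  then have "\<beta> * real (card V) \<le> \<beta> * (real (card ?W) + real k * (1 + real \<Delta>))"
    using \<beta> by (intro mult_left_mono) auto
  also have "\<dots> = real (card ?W) * \<beta> + \<beta> * (real k * (1 + real \<Delta>))"
    by (simp add: algebra_simps)
  also have "\<dots> \<le> 2 * real k * real \<Delta> * (real \<Delta> - 1) + 2 * real \<Delta> * (real k * (1 + real \<Delta>))"
    using edges isoperimetric_constant_le by (intro add_mono mult_right_mono) auto
  also have "\<dots> = 4 * real k * (real \<Delta>)^2"
    by (simp add: algebra_simps power2_eq_square)
  finally show False using few_cops by simp
qed

text \<open>The robber's invariant: she stands outside the closed neighbourhood of the cops, in a
  component of its complement containing more than half of the vertices.\<close>

lemma not_cops_force_from_giant_component:
  assumes "cops_force E cs r"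
    and few_cops: "4 * real k * (real \<Delta>)^2 < \<beta> * real (card V)"
    and "length cs \<le> k" "set cs \<subseteq> V" "r \<in> V - closed_nbhd V E (set cs)"
    and "card V < 2 * card (component E (closed_nbhd V E (set cs)) r)"
  shows False
  using assms(1,3-)
proof (induction rule: cops_force.induct)
  case (1 cs cs' r)
  let ?N = "closed_nbhd V E (set cs)" and ?N' = "closed_nbhd V E (set cs')"
  have cs': "set cs' \<subseteq> ?N" using set_cop_step_subset_closed_nbhd[OF 1(1) simple] .
  have "?N \<subseteq> V" using 1(4) unfolding closed_nbhd_def by blast
  then have cs'_V: "set cs' \<subseteq> V" using cs' by blast
  have cs'_length: "length cs' \<le> k" using 1(1,3) by (simp add: cop_step_def)
  then have "card (set cs') \<le> k" using card_length[of cs'] by linarith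
  then obtain x where x: "x \<in> V - ?N'" "card V < 2 * card (component E ?N' x)"
    using giant_component[OF few_cops cs'_V] by blast
  have old: "component E ?N r \<subseteq> component E (set cs') r"
    by (rule component_antimono[OF cs'])
  have new: "component E ?N' x \<subseteq> component E (set cs') x"
    by (rule component_antimono) (auto simp: closed_nbhd_def)
  have "component E ?N r \<subseteq> V" "component E ?N' x \<subseteq> V"
    using component_subset[OF simple] 1(5) x(1) by auto
  then have "component E ?N r \<inter> component E ?N' x \<noteq> {}"
    using 1(6) x(2) by (rule card_gt_half_inter_nonempty[OF finite_V])
  then obtain z where "z \<in> component E (set cs') r" "z \<in> component E (set cs') x"
    using old new by blast
  then have "x \<in> component E (set cs') r"
    using component_eq[OF simple] self_in_component[of x E "set cs'"] by metis
  then have "robber_reach E (set cs') r x" by (simp add: component_def)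
  moreover have "r \<notin> set cs'" using cs' 1(5) by blast
  ultimately show False
    using 1(2) x cs'_length cs'_V by blast
qed

lemma not_cops_win:
  assumes "4 * real k * (real \<Delta>)^2 < \<beta> * real (card V)"
  shows "\<not> cops_win V E k"
proof
  assume "cops_win V E k"
  then obtain cs where cs: "length cs = k" "set cs \<subseteq> V" "\<forall>r\<in>V. cops_force E cs r"
    unfolding cops_win_def by blast
  obtain r where "r \<in> V - closed_nbhd V E (set cs)"
    "card V < 2 * card (component E (closed_nbhd V E (set cs)) r)"
    using giant_component[OF assms cs(2)] card_length[of cs] cs(1) by blast
  then show False
    using not_cops_force_from_giant_component[OF _ assms] cs by blast
qed

lemma c_inf_ge: "\<beta> * real (card V) / (4 * (real \<Delta>)^2) \<le> real (c_inf V E)"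
proof (rule le_c_inf[OF finite_V])
  fix k assume k: "real k < \<beta> * real (card V) / (4 * (real \<Delta>)^2)"
  then have "\<Delta> > 0" by (cases "\<Delta> = 0") auto
  then have "4 * real k * (real \<Delta>)^2 < \<beta> * real (card V)"
    using k by (simp add: field_simps)
  then show "\<not> cops_win V E k" by (rule not_cops_win)
qed

end

lemma c_inf_prod_ge:
  assumes "1 \<le> m" "\<forall>i<m. simple_graph (V i) (E i)" "\<forall>i<m. 2 \<le> card (V i)"
    and "\<forall>i<m. isoperimetric (V i) (E i) \<gamma>" "0 \<le> \<gamma>" "(\<Sum>i<m. max_degree (V i) (E i)) \<le> \<Delta>"
  shows "\<gamma> * real (card (prod_V m V)) / (4 * (real \<Delta>)^2) \<le> real (c_inf (prod_V m V) (prod_E m V E))"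
proof -
  have "\<forall>i<m. finite (V i) \<and> V i \<noteq> {}"
    using assms(2,3) simple_graph_finite by fastforce
  then interpret isoperimetric_bounded_degree "prod_V m V" "prod_E m V E" \<Delta> \<gamma>
  proof unfold_locales
    show "simple_graph (prod_V m V) (prod_E m V E)" using assms(2) by (rule simple_graph_prod)
    show "\<forall>v\<in>prod_V m V. degree (prod_V m V) (prod_E m V E) v \<le> \<Delta>"
      using degree_prod_le[OF assms(2)] assms(6) order_trans by blast
    show "2 \<le> card (prod_V m V)" using assms(1,3) by (rule card_prod_V_ge_2)
  qed (rule isoperimetric_prod; use assms in auto)
  show ?thesis by (rule c_inf_ge)
qed

lemma c_inf_prod_ge_edge_iso:
  assumes "1 \<le> m" "\<forall>i<m. simple_graph (V i) (E i)" "\<forall>i<m. 2 \<le> card (V i)"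
  shows "Min ((\<lambda>i. edge_iso (V i) (E i)) ` {0..<m}) * real (card (prod_V m V))
      / (4 * (real (\<Sum>i<m. max_degree (V i) (E i)))^2) \<le> real (c_inf (prod_V m V) (prod_E m V E))"
proof (rule c_inf_prod_ge[OF assms])
  show "\<forall>i<m. isoperimetric (V i) (E i) (Min ((\<lambda>i. edge_iso (V i) (E i)) ` {0..<m}))"
  proof (intro allI impI)
    fix i assume "i < m"
    then show "isoperimetric (V i) (E i) (Min ((\<lambda>i. edge_iso (V i) (E i)) ` {0..<m}))"
      using assms(2,3) by (intro isoperimetric_mono[OF isoperimetric_edge_iso] Min_le) auto
  qed
  show "0 \<le> Min ((\<lambda>i. edge_iso (V i) (E i)) ` {0..<m})"
    using assms(1-3) by (subst Min_ge_iff) (auto intro: edge_iso_nonneg)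
qed simp

lemma c_inf_prod_ge_boundary_bound:
  assumes "1 \<le> m" "\<forall>i<m. simple_graph (V i) (E i)" "\<forall>i<m. 2 \<le> card (V i)"
    and "\<forall>i<m. max_degree (V i) (E i) \<le> 2" "\<forall>i<m. card (V i) \<le> N"
    and "\<And>i A. i < m \<Longrightarrow> A \<subseteq> V i \<Longrightarrow> A \<noteq> {} \<Longrightarrow> A \<noteq> V i \<Longrightarrow> b \<le> card (edge_boundary (V i) (E i) A)"
  shows "real b * real (card (prod_V m V)) / (4 * real N * (real m)^2) \<le> real (c_inf (prod_V m V) (prod_E m V E))"
proof -
  have "(\<Sum>i<m. max_degree (V i) (E i)) \<le> 2 * m"
    using sum_bounded_above[of "{..<m}" "\<lambda>i. max_degree (V i) (E i)" 2] assms(4) by simp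
  then have "4 * real b / real N * real (card (prod_V m V)) / (4 * (real (2 * m))^2)
      \<le> real (c_inf (prod_V m V) (prod_E m V E))"
    using assms by (intro c_inf_prod_ge allI impI isoperimetric_of_boundary_bound) auto
  then show ?thesis by (simp add: field_simps power2_eq_square)
qed

section \<open>Paths and cycles\<close>

lemma bij_betw_indexE:
  assumes "bij_betw f {0..<N} V" "x \<in> V"
  obtains i where "i < N" "x = f i"
  using assms by (metis atLeastLessThan_iff bij_betw_def imageE)

lemma path_graph_indexing:
  assumes "is_path_graph V E"
  obtains f where "bij_betw f {0..<card V} V"
    "\<And>a b. a < card V \<Longrightarrow> b < card V \<Longrightarrow> E (f a) (f b) \<longleftrightarrow> a + 1 = b \<or> b + 1 = a"
    "\<And>x y. E x y \<Longrightarrow> x \<in> V \<and> y \<in> V"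
proof -
  obtain f where bij: "bij_betw f {0..<card V} V"
    and E: "\<forall>x y. E x y \<longleftrightarrow> (\<exists>i<card V. \<exists>j<card V. x = f i \<and> y = f j \<and> (i + 1 = j \<or> j + 1 = i))"
    using assms unfolding is_path_graph_def by blast
  have inj: "a = b" if "a < card V" "b < card V" "f a = f b" for a b
    using bij that by (auto simp: bij_betw_def inj_on_def)
  show thesis
  proof (rule that[OF bij])
    show "E (f a) (f b) \<longleftrightarrow> a + 1 = b \<or> b + 1 = a" if ab: "a < card V" "b < card V" for a b
    proof
      assume "E (f a) (f b)"
      then obtain i j where "i < card V" "j < card V" "f a = f i" "f b = f j" "i + 1 = j \<or> j + 1 = i"
        using E by blast
      then show "a + 1 = b \<or> b + 1 = a" using inj[OF ab(1)] inj[OF ab(2)] by metis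
    qed (use E ab in blast)
    show "x \<in> V \<and> y \<in> V" if "E x y" for x y
      using that bij_betwE[OF bij] E by fastforce
  qed
qed

lemma cycle_graph_indexing:
  assumes "is_cycle_graph V E"
  obtains f where "bij_betw f {0..<card V} V"
    "\<And>a b. a < card V \<Longrightarrow> b < card V \<Longrightarrow>
       E (f a) (f b) \<longleftrightarrow> b = (a + 1) mod card V \<or> a = (b + 1) mod card V"
    "\<And>x y. E x y \<Longrightarrow> x \<in> V \<and> y \<in> V"
proof -
  obtain f where bij: "bij_betw f {0..<card V} V"
    and E: "\<forall>x y. E x y \<longleftrightarrow> (\<exists>i<card V. \<exists>j<card V. x = f i \<and> y = f j \<and>
        (j = (i + 1) mod card V \<or> i = (j + 1) mod card V))"
    using assms unfolding is_cycle_graph_def by blast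
  have inj: "a = b" if "a < card V" "b < card V" "f a = f b" for a b
    using bij that by (auto simp: bij_betw_def inj_on_def)
  show thesis
  proof (rule that[OF bij])
    show "E (f a) (f b) \<longleftrightarrow> b = (a + 1) mod card V \<or> a = (b + 1) mod card V"
      if ab: "a < card V" "b < card V" for a b
    proof
      assume "E (f a) (f b)"
      then obtain i j where "i < card V" "j < card V" "f a = f i" "f b = f j"
        "j = (i + 1) mod card V \<or> i = (j + 1) mod card V"
        using E by blast
      then show "b = (a + 1) mod card V \<or> a = (b + 1) mod card V" using inj[OF ab(1)] inj[OF ab(2)] by metis
    qed (use E ab in blast)
    show "x \<in> V \<and> y \<in> V" if "E x y" for x y
      using that bij_betwE[OF bij] E by fastforce
  qed
qed

text \<open>A cop walking up the indices f 0, f 1, ... catches a robber who cannot get behind it;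
  the extra stationary cops ds may be needed to block the way around.\<close>

lemma cops_force_chase:
  fixes N :: nat
  assumes step: "\<And>i. i + 1 < N \<Longrightarrow> E (f i) (f (i + 1))"
    and forward: "\<And>i a y. i < a \<Longrightarrow> a < N \<Longrightarrow> E (f a) y \<Longrightarrow> y \<notin> set ds \<Longrightarrow> \<exists>b\<ge>i. b < N \<and> y = f b"
  shows "i < t \<Longrightarrow> t < N \<Longrightarrow> cops_force E (ds @ [f i]) (f t)"
proof (induction "N - i" arbitrary: i t rule: less_induct)
  case less
  let ?cs = "ds @ [f (i + 1)]"
  have move: "cop_step E (ds @ [f i]) ?cs"
    using step less.prems by (auto simp: cop_step_def nth_append)
  have confined: "\<exists>t'. i + 1 < t' \<and> t' < N \<and> r = f t'"
    if "robber_reach E (set ?cs) (f t) r" "t \<noteq> i + 1" for r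
    using that(1) unfolding robber_reach_def
  proof (induction rule: rtranclp_induct)
    case base
    show ?case using that(2) less.prems by (intro exI[of _ t]) auto
  next
    case (step a y)
    obtain ta where ta: "i + 1 < ta" "ta < N" "a = f ta" using step.IH by blast
    moreover have "E a y" "y \<notin> set ds" "y \<noteq> f (i + 1)" using step.hyps by auto
    ultimately obtain b where "i + 1 \<le> b" "b < N" "y = f b"
      using forward[of "i + 1" ta y] by blast
    then show ?case using \<open>y \<noteq> f (i + 1)\<close> le_neq_implies_less by blast
  qed
  have "f t \<in> set ?cs \<or> (\<forall>r. robber_reach E (set ?cs) (f t) r \<longrightarrow> cops_force E ?cs r)"
  proof (cases "t = i + 1")
    case False
    then show ?thesis
      using confined less.hyps[of "i + 1"] less.prems by fastforce
  qed simp
  then show ?case by (rule cops_force.intros[OF move])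
qed

lemma cops_win_by_chase:
  fixes N :: nat
  assumes "f ` {0..<N} = V" "0 < N" "set ds \<subseteq> V"
    and "\<And>i. i + 1 < N \<Longrightarrow> E (f i) (f (i + 1))"
    and "\<And>i a y. i < a \<Longrightarrow> a < N \<Longrightarrow> E (f a) y \<Longrightarrow> y \<notin> set ds \<Longrightarrow> \<exists>b\<ge>i. b < N \<and> y = f b"
  shows "cops_win V E (Suc (length ds))"
  unfolding cops_win_def
proof (intro exI conjI ballI)
  show "length (ds @ [f 0]) = Suc (length ds)" by simp
  have "f 0 \<in> V" using assms(1,2) by force
  then show "set (ds @ [f 0]) \<subseteq> V" using assms(3) by simp
  fix r assume "r \<in> V"
  then obtain t where t: "t < N" "r = f t" using assms(1) by auto
  show "cops_force E (ds @ [f 0]) r"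
  proof (cases "t = 0")
    case True
    show ?thesis
      by (rule cops_force.intros[of E _ "ds @ [f 0]"]) (auto simp: cop_step_def True t)
  next
    case False
    then show ?thesis using cops_force_chase[of N E f ds, OF assms(4,5)] t by simp
  qed
qed

lemma c_inf_path_le_1:
  fixes V :: "'v set"
  assumes "is_path_graph V E" "V \<noteq> {}" "finite V"
  shows "c_inf V E \<le> 1"
proof -
  obtain f where f: "bij_betw f {0..<card V} V"
    and adj: "\<And>a b. a < card V \<Longrightarrow> b < card V \<Longrightarrow> E (f a) (f b) \<longleftrightarrow> a + 1 = b \<or> b + 1 = a"
    and E: "\<And>x y. E x y \<Longrightarrow> x \<in> V \<and> y \<in> V"
    using path_graph_indexing[OF assms(1)] by blast
  have "cops_win V E (Suc (length ([] :: 'v list)))"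
  proof (rule cops_win_by_chase)
    show "f ` {0..<card V} = V" using f by (simp add: bij_betw_def)
    show "0 < card V" using assms(2,3) by (simp add: card_gt_0_iff)
    show "E (f i) (f (i + 1))" if "i + 1 < card V" for i using adj that by simp
    show "\<exists>b\<ge>i. b < card V \<and> y = f b" if edge: "i < a" "a < card V" "E (f a) y" for i a y
    proof -
      obtain b where b: "b < card V" "y = f b" using f E[OF edge(3)] by (blast elim: bij_betw_indexE)
      then have "i \<le> b" using adj[of a b] edge by auto
      then show ?thesis using b by blast
    qed
  qed simp
  then show ?thesis by (auto dest: c_inf_le)
qed

lemma c_inf_cycle_le_2:
  fixes V :: "'v set"
  assumes "is_cycle_graph V E" "finite V"
  shows "c_inf V E \<le> 2"
proof -
  let ?N = "card V"
  obtain f where f: "bij_betw f {0..<?N} V"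
    and adj: "\<And>a b. a < ?N \<Longrightarrow> b < ?N \<Longrightarrow> E (f a) (f b) \<longleftrightarrow> b = (a + 1) mod ?N \<or> a = (b + 1) mod ?N"
    and E: "\<And>x y. E x y \<Longrightarrow> x \<in> V \<and> y \<in> V"
    using cycle_graph_indexing[OF assms(1)] by blast
  have N: "3 \<le> ?N" using assms(1) by (simp add: is_cycle_graph_def)
  \<comment> \<open>A cop parked at f 0 cuts the cycle into a path.\<close>
  have "cops_win V E (Suc (length [f 0]))"
  proof (rule cops_win_by_chase)
    show "f ` {0..<?N} = V" using f by (simp add: bij_betw_def)
    then show "set [f 0] \<subseteq> V" using N by auto
    show "E (f i) (f (i + 1))" if "i + 1 < ?N" for i using adj that by simp
    show "\<exists>b\<ge>i. b < ?N \<and> y = f b"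
      if edge: "i < a" "a < ?N" "E (f a) y" "y \<notin> set [f 0]" for i a y
    proof -
      obtain b where b: "b < ?N" "y = f b" using f E[OF edge(3)] by (blast elim: bij_betw_indexE)
      then have "b \<noteq> 0" using edge(4) by (metis list.set_intros(1))
      then have "i \<le> b" using adj[of a b] b edge by (auto simp: mod_if split: if_splits)
      then show ?thesis using b by blast
    qed
  qed (use N in auto)
  then show ?thesis by (auto dest: c_inf_le)
qed

lemma max_degree_path_le_2:
  assumes "is_path_graph V E" "finite V" "V \<noteq> {}"
  shows "max_degree V E \<le> 2"
proof -
  obtain f where f: "bij_betw f {0..<card V} V"
    and adj: "\<And>a b. a < card V \<Longrightarrow> b < card V \<Longrightarrow> E (f a) (f b) \<longleftrightarrow> a + 1 = b \<or> b + 1 = a"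
    and "\<And>x y. E x y \<Longrightarrow> x \<in> V \<and> y \<in> V"
    using path_graph_indexing[OF assms(1)] by blast
  have "degree V E x \<le> 2" if x: "x \<in> V" for x
  proof -
    obtain i where i: "i < card V" "x = f i" using f x by (rule bij_betw_indexE)
    have "y \<in> {f (i + 1), f (i - 1)}" if "y \<in> V" "E x y" for y
    proof -
      obtain b where b: "b < card V" "y = f b" using f \<open>y \<in> V\<close> by (rule bij_betw_indexE)
      then have "i + 1 = b \<or> b + 1 = i" using adj[of i b] i that by simp
      then show ?thesis using b by auto
    qed
    then have "{y \<in> V. E x y} \<subseteq> {f (i + 1), f (i - 1)}" by blast
    then have "degree V E x \<le> card {f (i + 1), f (i - 1)}"
      unfolding degree_def by (intro card_mono) auto
    also have "\<dots> \<le> 2" by (simp add: card_insert_if)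
    finally show ?thesis .
  qed
  then show ?thesis using assms(2,3) by (intro max_degree_le) auto
qed

lemma max_degree_cycle_le_2:
  assumes "is_cycle_graph V E" "finite V" "V \<noteq> {}"
  shows "max_degree V E \<le> 2"
proof -
  let ?N = "card V"
  obtain f where f: "bij_betw f {0..<?N} V"
    and adj: "\<And>a b. a < ?N \<Longrightarrow> b < ?N \<Longrightarrow> E (f a) (f b) \<longleftrightarrow> b = (a + 1) mod ?N \<or> a = (b + 1) mod ?N"
    and "\<And>x y. E x y \<Longrightarrow> x \<in> V \<and> y \<in> V"
    using cycle_graph_indexing[OF assms(1)] by blast
  have "degree V E x \<le> 2" if x: "x \<in> V" for x
  proof -
    obtain i where i: "i < ?N" "x = f i" using f x by (rule bij_betw_indexE)
    let ?pred = "if i = 0 then ?N - 1 else i - 1"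
    have "y \<in> {f ((i + 1) mod ?N), f ?pred}" if "y \<in> V" "E x y" for y
    proof -
      obtain b where b: "b < ?N" "y = f b" using f \<open>y \<in> V\<close> by (rule bij_betw_indexE)
      then have "b = (i + 1) mod ?N \<or> i = (b + 1) mod ?N" using adj[of i b] i that by simp
      then have "b = (i + 1) mod ?N \<or> b = ?pred" using b(1) i(1) by (auto simp: mod_if split: if_splits)
      then show ?thesis using b by auto
    qed
    then have "{y \<in> V. E x y} \<subseteq> {f ((i + 1) mod ?N), f ?pred}" by blast
    then have "degree V E x \<le> card {f ((i + 1) mod ?N), f ?pred}"
      unfolding degree_def by (intro card_mono) auto
    also have "\<dots> \<le> 2" by (simp add: card_insert_if)
    finally show ?thesis .
  qed
  then show ?thesis using assms(2,3) by (intro max_degree_le) auto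
qed

lemma ex_mod_succ_change:
  fixes N :: nat
  assumes "p < N" "P p" "q < N" "\<not> P q"
  shows "\<exists>j<N. P j \<and> \<not> P ((j + 1) mod N)"
proof (rule ccontr)
  assume "\<not> ?thesis"
  then have step: "P ((j + 1) mod N)" if "j < N" "P j" for j
    using that by blast
  have "P ((p + t) mod N)" for t
  proof (induction t)
    case (Suc t)
    then show ?case using step[of "(p + t) mod N"] assms(1) by (simp add: mod_Suc_eq)
  qed (use assms in simp)
  from this[of "N - p + q"] show False using assms by simp
qed

lemma card_edge_boundary_cycle_ge_2:
  assumes "is_cycle_graph V E" "A \<subseteq> V" "A \<noteq> {}" "A \<noteq> V" "finite V"
  shows "2 \<le> card (edge_boundary V E A)"
proof -
  let ?N = "card V" and ?s = "\<lambda>j. (j + 1) mod card V"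
  obtain f where f: "bij_betw f {0..<?N} V"
    and adj: "\<And>a b. a < ?N \<Longrightarrow> b < ?N \<Longrightarrow> E (f a) (f b) \<longleftrightarrow> b = (a + 1) mod ?N \<or> a = (b + 1) mod ?N"
    and "\<And>x y. E x y \<Longrightarrow> x \<in> V \<and> y \<in> V"
    using cycle_graph_indexing[OF assms(1)] by blast
  have N: "3 \<le> ?N" using assms(1) by (simp add: is_cycle_graph_def)
  have inj: "a = b" if "a < ?N" "b < ?N" "f a = f b" for a b
    using f that by (auto simp: bij_betw_def inj_on_def)
  obtain a b where "a \<in> A" "b \<in> V - A" using assms(2-4) by blast
  then obtain p q where pq: "p < ?N" "f p \<in> A" "q < ?N" "f q \<notin> A"
    using bij_betw_indexE[OF f] assms(2) by (metis Diff_iff subsetD)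
  obtain j where j: "j < ?N" "f j \<in> A" "f (?s j) \<notin> A"
    using ex_mod_succ_change[of p ?N "\<lambda>j. f j \<in> A"] pq by blast
  obtain j' where j': "j' < ?N" "f j' \<notin> A" "f (?s j') \<in> A"
    using ex_mod_succ_change[of q ?N "\<lambda>j. f j \<notin> A"] pq by blast
  have s: "?s j < ?N" "?s j' < ?N" using N by simp_all
  have out: "(f j, f (?s j)) \<in> edge_boundary V E A" and into: "(f (?s j'), f j') \<in> edge_boundary V E A"
    using j j' s adj f by (auto simp: edge_boundary_def bij_betw_def)
  \<comment> \<open>The exit and entry edges differ since otherwise j = j + 2 (mod N), impossible for N \<ge> 3.\<close>
  have "(f j, f (?s j)) \<noteq> (f (?s j'), f j')"
  proof
    assume "(f j, f (?s j)) = (f (?s j'), f j')"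
    then have "j = ?s j'" "?s j = j'" using inj j j' s by auto
    then have "j = ?s (?s j)" by simp
    then show False using j(1) N by (auto simp: mod_if split: if_splits)
  qed
  moreover have "finite (edge_boundary V E A)"
    using assms(5,2) by (rule finite_edge_boundary)
  ultimately show ?thesis
    using card_mono[of "edge_boundary V E A" "{(f j, f (?s j)), (f (?s j'), f j')}"] out into by auto
qed

lemma c_inf_prod_paths:
  assumes "1 \<le> m" "\<forall>i<m. simple_graph (V i) (E i)" "\<forall>i<m. connected_graph (V i) (E i)"
    and "\<forall>i<m. 2 \<le> card (V i)" "\<forall>i<m. is_path_graph (V i) (E i)" "\<forall>i<m. card (V i) \<le> card (V 0)"
  shows "real (card (prod_V m V)) / (4 * real (card (V 0)) * (real m)^2) \<le> real (c_inf (prod_V m V) (prod_E m V E))"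
    and "real (c_inf (prod_V m V) (prod_E m V E)) \<le> real (card (prod_V m V)) / real (card (V 0))"
proof -
  have fin: "\<forall>i<m. finite (V i) \<and> V i \<noteq> {}"
    using assms(2,4) simple_graph_finite by fastforce
  have "real 1 * real (card (prod_V m V)) / (4 * real (card (V 0)) * (real m)^2)
      \<le> real (c_inf (prod_V m V) (prod_E m V E))"
  proof (rule c_inf_prod_ge_boundary_bound)
    show "\<forall>i<m. max_degree (V i) (E i) \<le> 2"
      using assms(5) fin max_degree_path_le_2 by blast
    show "1 \<le> card (edge_boundary (V i) (E i) A)"
      if "i < m" "A \<subseteq> V i" "A \<noteq> {}" "A \<noteq> V i" for i A
      using card_edge_boundary_ge_1 assms(2,3) that by blast
  qed (use assms in auto)
  then show "real (card (prod_V m V)) / (4 * real (card (V 0)) * (real m)^2)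
      \<le> real (c_inf (prod_V m V) (prod_E m V E))"
    by simp
  show "real (c_inf (prod_V m V) (prod_E m V E)) \<le> real (card (prod_V m V)) / real (card (V 0))"
    using c_inf_prod_le_factor_bound[of m V E 0 1] c_inf_path_le_1[of "V 0" "E 0"] assms fin by simp
qed

lemma c_inf_prod_cycles:
  assumes "1 \<le> m" "\<forall>i<m. simple_graph (V i) (E i)"
    and "\<forall>i<m. 2 \<le> card (V i)" "\<forall>i<m. is_cycle_graph (V i) (E i)" "\<forall>i<m. card (V i) \<le> card (V 0)"
  shows "real (card (prod_V m V)) / (2 * real (card (V 0)) * (real m)^2) \<le> real (c_inf (prod_V m V) (prod_E m V E))"
    and "real (c_inf (prod_V m V) (prod_E m V E)) \<le> 2 * real (card (prod_V m V)) / real (card (V 0))"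
proof -
  have fin: "\<forall>i<m. finite (V i) \<and> V i \<noteq> {}"
    using assms(2,3) simple_graph_finite by fastforce
  have "real 2 * real (card (prod_V m V)) / (4 * real (card (V 0)) * (real m)^2)
      \<le> real (c_inf (prod_V m V) (prod_E m V E))"
  proof (rule c_inf_prod_ge_boundary_bound)
    show "\<forall>i<m. max_degree (V i) (E i) \<le> 2"
      using assms(4) fin max_degree_cycle_le_2 by blast
    show "2 \<le> card (edge_boundary (V i) (E i) A)"
      if "i < m" "A \<subseteq> V i" "A \<noteq> {}" "A \<noteq> V i" for i A
      using card_edge_boundary_cycle_ge_2 assms(4) fin that by blast
  qed (use assms in auto)
  then show "real (card (prod_V m V)) / (2 * real (card (V 0)) * (real m)^2) \<le> real (c_inf (prod_V m V) (prod_E m V E))"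
    by simp
  show "real (c_inf (prod_V m V) (prod_E m V E)) \<le> 2 * real (card (prod_V m V)) / real (card (V 0))"
    using c_inf_prod_le_factor_bound[of m V E 0 2] c_inf_cycle_le_2[of "V 0" "E 0"] assms fin by simp
qed

theorem mainTheorem7:
  fixes m :: nat and V :: "nat \<Rightarrow> 'a set" and E :: "nat \<Rightarrow> 'a \<Rightarrow> 'a \<Rightarrow> bool"
  assumes "1 \<le> m"
    and "\<forall>i<m. simple_graph (V i) (E i)"
    and "\<forall>i<m. connected_graph (V i) (E i)"
    and "\<forall>i<m. 2 \<le> card (V i)"
  shows
   "(let n = card (prod_V m V); c = real (c_inf (prod_V m V) (prod_E m V E)) in
     (Min ((\<lambda>i. edge_iso (V i) (E i)) ` {0..<m}) * real n
        / (4 * (real (\<Sum>i<m. max_degree (V i) (E i)))^2) \<le> c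
      \<and> (\<forall>j<m. c \<le> real n * real (c_inf (V j) (E j)) / real (card (V j))))
   \<and> ((\<forall>i<m. is_path_graph (V i) (E i)) \<and> (\<forall>i<m. card (V i) \<le> card (V 0)) \<longrightarrow>
        real n / (4 * real (card (V 0)) * (real m)^2) \<le> c \<and> c \<le> real n / real (card (V 0)))
   \<and> ((\<forall>i<m. is_cycle_graph (V i) (E i)) \<and> (\<forall>i<m. card (V i) \<le> card (V 0))
        \<and> even (card (V 0)) \<longrightarrow>
        real n / (2 * real (card (V 0)) * (real m)^2) \<le> c \<and> c \<le> 2 * real n / real (card (V 0))))"
proof -
  have fin: "\<forall>i<m. finite (V i) \<and> V i \<noteq> {}"
    using assms(2,4) simple_graph_finite by fastforce
  have upper: "real (c_inf (prod_V m V) (prod_E m V E))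
      \<le> real (card (prod_V m V)) * real (c_inf (V j) (E j)) / real (card (V j))" if "j < m" for j
    using that assms(2) fin by (intro c_inf_prod_le) auto
  show ?thesis
    unfolding Let_def
    using c_inf_prod_ge_edge_iso[OF assms(1,2,4)] upper
      c_inf_prod_paths[OF assms(1-4)] c_inf_prod_cycles[OF assms(1,2,4)] by blast
qed

end
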